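(* In the setting of the context, assume condition (A): for each $1\le j\le d$ and $x_j\in D_j$ there exists $i$ with $\tilde\xi^i\in D$ and $\tilde\xi^i_j\in B_j(x_j,h_j)$. Then there exists a solution of the SBF system satisfying the SBF constraints. If $(\hat{\mathbf{f}}_j)_{j\le d}$ and $(\hat{\mathbf{f}}^\star_j)_{j\le d}$ are solutions of the SBF system, then $\bigoplus_{j=1}^d\hat{\mathbf{f}}_j(x_j)=\bigoplus_{j=1}^d\hat{\mathbf{f}}^\star_j(x_j)$ for $\hat P^D_\xi$-almost every $\mathbf{x}\in D$. Moreover, if both solutions satisfy the SBF constraints and for each $\mathbf{x}\in D$ there is an $i$ with $\tilde\xi^i\in D\cap\prod_{j=1}^dB_j(x_j,h_j)$, then $\hat{\mathbf{f}}_j=\hat{\mathbf{f}}^\star_j$ Lebesgue-almost everywhere on $D_j$ for all $1\le j\le d$.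
   Context: $\mathbb{H}$ is a separable real Hilbert space with operations $\oplus,\odot$, subtraction $\ominus$, zero $\mathbf{0}$, norm $\|\cdot\|$; $\mathbb{H}$-valued integrals are Bochner integrals. Fix $d\ge1$, $L_j\in\mathbb{N}$, compact $D_j\subset\mathbb{R}^{L_j}$, $D=\prod_jD_j$; $\|\cdot\|_j$ is the Euclidean norm and $B_j(x,R)$ the open ball in $\mathbb{R}^{L_j}$. Given data $(\tilde\xi^i,\tilde{\mathbf{Y}}^i)$, $1\le i\le n$, with $\tilde\xi^i=(\tilde\xi^i_1,\dots,\tilde\xi^i_d)$, $\tilde\xi^i_j\in\mathbb{R}^{L_j}$, $\tilde{\mathbf{Y}}^i\in\mathbb{H}$ (at least one $\tilde\xi^i\in D$), bandwidths $h_j>0$, and continuous $K_j:[0,\infty)\to[0,\infty)$ positive on $[0,1)$ and zero on $[1,\infty)$. Let $K_{h_j}(x_j,u_j)=h_j^{-L_j}K_j(\|x_j-u_j\|_j/h_j)/\int_{D_j}h_j^{-L_j}K_j(\|t_j-u_j\|_j/h_j)dt_j$ when the denominator is nonzero and $K_{h_j}\equiv|D_j|^{-1}$ otherwise. Let $\hat p_0^D=n^{-1}\sum_iI(\tilde\xi^i\in D)$, $\hat{\mathbf{f}}_0=(\hat p_0^Dn)^{-1}\odot\bigoplus_i(\tilde{\mathbf{Y}}^i\odot I(\tilde\xi^i\in D))$, $\hat p^D(\mathbf{x})=(\hat p_0^Dn)^{-1}\sum_i\prod_jK_{h_j}(x_j,\tilde\xi^i_j)I(\tilde\xi^i\in D)$,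 $\hat p^D_j(x_j)=(\hat p_0^Dn)^{-1}\sum_iK_{h_j}(x_j,\tilde\xi^i_j)I(\tilde\xi^i\in D)$, $\hat p^D_{jk}(x_j,x_k)=(\hat p_0^Dn)^{-1}\sum_iK_{h_j}(x_j,\tilde\xi^i_j)K_{h_k}(x_k,\tilde\xi^i_k)I(\tilde\xi^i\in D)$, $\hat{\mathbf{m}}_j(x_j)=(\hat p^D_j(x_j)\hat p^D_0n)^{-1}\odot\bigoplus_i(\tilde{\mathbf{Y}}^i\odot(K_{h_j}(x_j,\tilde\xi^i_j)I(\tilde\xi^i\in D)))$. The SBF system for maps $\hat{\mathbf{f}}_j:D_j\to\mathbb{H}$ is $\hat{\mathbf{f}}_j(x_j)=\hat{\mathbf{m}}_j(x_j)\ominus\hat{\mathbf{f}}_0\ominus\bigoplus_{k\ne j}\int_{D_k}\hat{\mathbf{f}}_k(x_k)\odot\frac{\hat p^D_{jk}(x_j,x_k)}{\hat p^D_j(x_j)}dx_k$ for all $x_j\in D_j$, $1\le j\le d$; the SBF constraints are $\int_{D_j}\hat{\mathbf{f}}_j\odot\hat p^D_j\,dx_j=\mathbf{0}$ and $\int_{D_j}\|\hat{\mathbf{f}}_j\|^2\hat p^D_jdx_j<\infty$ for all $j$. $\hat P^D_\xi$ is the probability measure $A\mapsto\int_A\hat p^D(\mathbf{x})d\mathbf{x}$ on $\bigotimes_j\mathcal{B}(D_j)$. The data need not be random or i.i.d. *)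

theory Defs
  imports "HOL-Analysis.Analysis"
begin

text \<open>Points of R^L are represented as functions nat => real that are extensional
  on {..<L} (i.e. elements of PiE {..<L} (%_. UNIV)); Lebesgue measure on R^L is
  the product of L copies of lborel.  Block indices j range over {1..d} and data
  indices i over {1..n}.\<close>

definition Leb :: "nat \<Rightarrow> (nat \<Rightarrow> real) measure" where
  "Leb L = PiM {..<L} (\<lambda>_. lborel)"

definition enorm :: "nat \<Rightarrow> (nat \<Rightarrow> real) \<Rightarrow> real" where
  "enorm L x = sqrt (\<Sum>k<L. (x k)\<^sup>2)"

definition Kh :: "nat \<Rightarrow> (nat \<Rightarrow> real) set \<Rightarrow> real \<Rightarrow> (real \<Rightarrow> real)
    \<Rightarrow> (nat \<Rightarrow> real) \<Rightarrow> (nat \<Rightarrow> real) \<Rightarrow> real" where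
  "Kh L D h K x u =
     (let den = (LINT t:D|Leb L. inverse (h ^ L) * K (enorm L (\<lambda>k. t k - u k) / h))
      in if den \<noteq> 0 then inverse (h ^ L) * K (enorm L (\<lambda>k. x k - u k) / h) / den
         else inverse (measure (Leb L) D))"

definition inD :: "nat \<Rightarrow> (nat \<Rightarrow> (nat \<Rightarrow> real) set) \<Rightarrow> (nat \<Rightarrow> nat \<Rightarrow> (nat \<Rightarrow> real)) \<Rightarrow> nat \<Rightarrow> bool" where
  "inD d D \<xi> i \<longleftrightarrow> (\<forall>j\<in>{1..d}. \<xi> i j \<in> D j)"

definition p0 :: "nat \<Rightarrow> (nat \<Rightarrow> (nat \<Rightarrow> real) set) \<Rightarrow> nat \<Rightarrow> (nat \<Rightarrow> nat \<Rightarrow> (nat \<Rightarrow> real)) \<Rightarrow> real" where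
  "p0 d D n \<xi> = (\<Sum>i\<in>{1..n}. of_bool (inD d D \<xi> i)) / real n"

definition f0 :: "nat \<Rightarrow> (nat \<Rightarrow> (nat \<Rightarrow> real) set) \<Rightarrow> nat \<Rightarrow> (nat \<Rightarrow> nat \<Rightarrow> (nat \<Rightarrow> real))
    \<Rightarrow> (nat \<Rightarrow> 'h::real_vector) \<Rightarrow> 'h" where
  "f0 d D n \<xi> Y = inverse (p0 d D n \<xi> * real n) *\<^sub>R
      (\<Sum>i\<in>{1..n}. of_bool (inD d D \<xi> i) *\<^sub>R Y i)"

definition KH where
  "KH L D h K j = Kh (L j) (D j) (h j) (K j)"

definition pD where
  "pD d L D h K n \<xi> (x :: nat \<Rightarrow> nat \<Rightarrow> real) = inverse (p0 d D n \<xi> * real n) *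
      (\<Sum>i\<in>{1..n}. (\<Prod>j\<in>{1..d}. KH L D h K j (x j) (\<xi> i j)) * of_bool (inD d D \<xi> i))"

definition pj where
  "pj d L D h K n \<xi> j xj = inverse (p0 d D n \<xi> * real n) *
      (\<Sum>i\<in>{1..n}. KH L D h K j xj (\<xi> i j) * of_bool (inD d D \<xi> i))"

definition pjk where
  "pjk d L D h K n \<xi> j k xj xk = inverse (p0 d D n \<xi> * real n) *
      (\<Sum>i\<in>{1..n}. KH L D h K j xj (\<xi> i j) * KH L D h K k xk (\<xi> i k) * of_bool (inD d D \<xi> i))"

definition mj :: "_ \<Rightarrow> _ \<Rightarrow> _ \<Rightarrow> _ \<Rightarrow> _ \<Rightarrow> _ \<Rightarrow> _ \<Rightarrow> (nat \<Rightarrow> 'h::real_vector) \<Rightarrow> nat \<Rightarrow> (nat \<Rightarrow> real) \<Rightarrow> 'h" where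
  "mj d L D h K n \<xi> Y j xj = inverse (pj d L D h K n \<xi> j xj * p0 d D n \<xi> * real n) *\<^sub>R
      (\<Sum>i\<in>{1..n}. (KH L D h K j xj (\<xi> i j) * of_bool (inD d D \<xi> i)) *\<^sub>R Y i)"

definition SBF_system :: "nat \<Rightarrow> (nat \<Rightarrow> nat) \<Rightarrow> (nat \<Rightarrow> (nat \<Rightarrow> real) set) \<Rightarrow> (nat \<Rightarrow> real)
    \<Rightarrow> (nat \<Rightarrow> real \<Rightarrow> real) \<Rightarrow> nat \<Rightarrow> (nat \<Rightarrow> nat \<Rightarrow> (nat \<Rightarrow> real))
    \<Rightarrow> (nat \<Rightarrow> 'h::{banach,second_countable_topology}) \<Rightarrow> (nat \<Rightarrow> (nat \<Rightarrow> real) \<Rightarrow> 'h) \<Rightarrow> bool" where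
  "SBF_system d L D h K n \<xi> Y f \<longleftrightarrow>
     (\<forall>j\<in>{1..d}. \<forall>x\<in>D j.
        (\<forall>k\<in>{1..d}-{j}. set_integrable (Leb (L k)) (D k)
            (\<lambda>t. (pjk d L D h K n \<xi> j k x t / pj d L D h K n \<xi> j x) *\<^sub>R f k t)) \<and>
        f j x = mj d L D h K n \<xi> Y j x - f0 d D n \<xi> Y
           - (\<Sum>k\<in>{1..d}-{j}. LINT t:D k|Leb (L k).
                 (pjk d L D h K n \<xi> j k x t / pj d L D h K n \<xi> j x) *\<^sub>R f k t))"

definition SBF_constraints :: "nat \<Rightarrow> (nat \<Rightarrow> nat) \<Rightarrow> (nat \<Rightarrow> (nat \<Rightarrow> real) set) \<Rightarrow> (nat \<Rightarrow> real)
    \<Rightarrow> (nat \<Rightarrow> real \<Rightarrow> real) \<Rightarrow> nat \<Rightarrow> (nat \<Rightarrow> nat \<Rightarrow> (nat \<Rightarrow> real))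
    \<Rightarrow> (nat \<Rightarrow> (nat \<Rightarrow> real) \<Rightarrow> 'h::{banach,second_countable_topology}) \<Rightarrow> bool" where
  "SBF_constraints d L D h K n \<xi> f \<longleftrightarrow>
     (\<forall>j\<in>{1..d}.
        set_integrable (Leb (L j)) (D j) (\<lambda>x. pj d L D h K n \<xi> j x *\<^sub>R f j x) \<and>
        (LINT x:D j|Leb (L j). pj d L D h K n \<xi> j x *\<^sub>R f j x) = 0 \<and>
        (\<integral>\<^sup>+x\<in>D j. ennreal ((norm (f j x))\<^sup>2 * pj d L D h K n \<xi> j x) \<partial>Leb (L j)) < \<infinity>)"

definition PD where
  "PD d L D h K n \<xi> = density (PiM {1..d} (\<lambda>j. restrict_space (Leb (L j)) (D j)))
      (\<lambda>x. ennreal (pD d L D h K n \<xi> x))"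

end

(*
  Under condition (A) the kernels kern j i centred at the data points in D never vanish
  simultaneously on D j, so the weights w j i = kern j i / ksum j form a partition of unity
  there. Each term on the right-hand side of the j-th SBF equation is a combination of these
  weights, so every solution is of the form f j = (SUM i. w j i *R beta i j) on D j, and the SBF
  system is equivalent to a finite linear system for the coefficients beta, governed by the
  symmetric doubly stochastic matrices C j i l = integral of kern j i * w j l.

  Existence: tested against the weights, the coefficient system becomes the normal equation of
  the projection onto additive functions in L2 of the density pD. Its Gram matrix is positive
  semidefinite, and a positive semidefinite system is solvable as soon as its right-hand side
  annihilates the null vectors of the quadratic form. Subtracting column means then enforces the
  constraints.

  Uniqueness: the coefficients of the difference of two solutions solve the homogeneous system,
  which makes the integral of pD times the squared norm of the difference of the additive fits
  vanish. Under the stronger covering condition pD is positive on all of D, so that difference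
  vanishes on D; integrating its squared norm against the product of the marginal densities,
  whose cross terms vanish by the constraints, leaves the weighted L2 norms of the component
  differences, which must therefore vanish.
*)

theory Submission
  imports Defs
begin

section \<open>Solvability of positive semidefinite linear systems\<close>

definition quad_form :: "('a \<Rightarrow> 'a \<Rightarrow> real) \<Rightarrow> 'a set \<Rightarrow> ('a \<Rightarrow> real) \<Rightarrow> real" where
  "quad_form b S v = (\<Sum>s\<in>S. \<Sum>t\<in>S. v s * b s t * v t)"

lemma quad_form_insert:
  assumes S: "finite S" "a \<notin> S" and sym: "\<And>s t. b s t = b t s"
  shows "quad_form b (insert a S) (v(a := x)) = x * x * b a a + 2 * x * (\<Sum>t\<in>S. b a t * v t) + quad_form b S v"
proof -
  have row: "(\<Sum>t\<in>insert a S. (v(a := x)) s * b s t * (v(a := x)) t) = v s * b s a * x + (\<Sum>t\<in>S. v s * b s t * v t)"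
    if "s \<in> S" for s
    using that S by (auto intro!: sum.cong)
  have "quad_form b (insert a S) (v(a := x)) =
      x * b a a * x + (\<Sum>t\<in>S. x * b a t * v t) + (\<Sum>s\<in>S. v s * b s a * x + (\<Sum>t\<in>S. v s * b s t * v t))"
    unfolding quad_form_def using S row by (auto intro!: sum.cong)
  also have "\<dots> = x * x * b a a + 2 * x * (\<Sum>t\<in>S. b a t * v t) + quad_form b S v"
    unfolding quad_form_def sum.distrib by (simp add: sum_distrib_left sym algebra_simps)
  finally show ?thesis .
qed

lemma quad_form_indicator:
  assumes "finite S" "t \<in> S"
  shows "quad_form b S (\<lambda>s. if s = t then 1 else 0) = b t t"
proof -
  have "(\<Sum>u\<in>S. (if s = t then 1 else 0) * b s u * (if u = t then 1 else 0)) = (if s = t then b s t else 0)" for s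
  proof -
    have "(\<Sum>u\<in>S. (if s = t then 1 else 0) * b s u * (if u = t then 1 else 0)) =
        (\<Sum>u\<in>S. if u = t then (if s = t then 1 else 0) * b s u else 0)"
      by (intro sum.cong) auto
    also have "\<dots> = (if s = t then b s t else 0)" using assms by (simp add: sum.delta)
    finally show ?thesis .
  qed
  then show ?thesis unfolding quad_form_def using assms by (simp add: sum.delta)
qed

lemma psd_zero_diagonal_row:
  assumes S: "finite S" "a \<notin> S" and sym: "\<And>s t. b s t = b t s"
    and psd: "\<And>v. quad_form b (insert a S) v \<ge> 0" and baa: "b a a = 0" and t: "t \<in> S"
  shows "b a t = 0"
proof (rule ccontr)
  assume ne: "b a t \<noteq> 0"
  define v where "v = (\<lambda>s. if s = t then 1 else (0::real))"
  define x where "x = - (b t t + 1) / (2 * b a t)"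
  have "quad_form b (insert a S) (v(a := x)) = 2 * x * b a t + b t t"
    using quad_form_insert[where b=b, OF S sym, where v=v and x=x] baa quad_form_indicator[OF S(1) t, of b] t S(1)
    by (simp add: v_def if_distrib cong: if_cong)
  also have "\<dots> = -1" using ne unfolding x_def by (simp add: field_simps)
  finally show False using psd[of "v(a := x)"] by simp
qed

lemma quad_form_schur_complement:
  assumes S: "finite S" "a \<notin> S" and sym: "\<And>s t. b s t = b t s" and baa: "b a a \<noteq> 0"
  shows "quad_form (\<lambda>s t. b s t - b s a * b a t / b a a) S v
    = quad_form b (insert a S) (v(a := - (\<Sum>t\<in>S. b a t * v t) / b a a))"
proof -
  define \<beta> where "\<beta> = (\<Sum>t\<in>S. b a t * v t)"
  have "(\<Sum>s\<in>S. \<Sum>t\<in>S. v s * (b s a * b a t / b a a) * v t) = \<beta> * \<beta> / b a a"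
    unfolding \<beta>_def sum_product sum_divide_distrib using sym by (simp add: mult_ac)
  then have "quad_form (\<lambda>s t. b s t - b s a * b a t / b a a) S v = quad_form b S v - \<beta> * \<beta> / b a a"
    unfolding quad_form_def by (simp add: sum_subtractf algebra_simps)
  also have "\<dots> = quad_form b (insert a S) (v(a := - \<beta> / b a a))"
    unfolding quad_form_insert[where b=b, OF S sym] \<beta>_def[symmetric] using baa by (simp add: field_simps)
  finally show ?thesis unfolding \<beta>_def .
qed

lemma sum_insert_scaleR_fun_upd:
  assumes "finite S" "a \<notin> S"
  shows "(\<Sum>s\<in>insert a S. g s *\<^sub>R (u(a := y)) s) = g a *\<^sub>R y + (\<Sum>s\<in>S. g s *\<^sub>R u s)"
proof -
  have "(\<Sum>s\<in>S. g s *\<^sub>R (u(a := y)) s) = (\<Sum>s\<in>S. g s *\<^sub>R u s)"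
    using assms by (intro sum.cong) auto
  then show ?thesis using assms by simp
qed

lemma solution_extend_zero_pivot:
  fixes c :: "'a \<Rightarrow> 'h::real_vector"
  assumes S: "finite S" "a \<notin> S" and sym: "\<And>s t. b s t = b t s"
    and row: "\<And>t. t \<in> S \<Longrightarrow> b a t = 0" and "c a = 0"
    and u: "\<forall>t\<in>S. (\<Sum>s\<in>S. b s t *\<^sub>R u s) = c t"
  shows "\<forall>t\<in>insert a S. (\<Sum>s\<in>insert a S. b s t *\<^sub>R (u(a := 0)) s) = c t"
  unfolding sum_insert_scaleR_fun_upd[OF S] using assms by (auto intro: sum.neutral)

lemma solution_extend_pivot:
  fixes c :: "'a \<Rightarrow> 'h::real_vector"
  assumes S: "finite S" "a \<notin> S" and sym: "\<And>s t. b s t = b t s" and baa: "b a a \<noteq> 0"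
    and u: "\<forall>t\<in>S. (\<Sum>s\<in>S. (b s t - b s a * b a t / b a a) *\<^sub>R u s) = c t - (b a t / b a a) *\<^sub>R c a"
  defines "ua \<equiv> (1 / b a a) *\<^sub>R (c a - (\<Sum>s\<in>S. b s a *\<^sub>R u s))"
  shows "\<forall>t\<in>insert a S. (\<Sum>s\<in>insert a S. b s t *\<^sub>R (u(a := ua)) s) = c t"
proof
  fix t assume t: "t \<in> insert a S"
  show "(\<Sum>s\<in>insert a S. b s t *\<^sub>R (u(a := ua)) s) = c t"
  proof (cases "t = a")
    case True
    have "b a a *\<^sub>R ua = c a - (\<Sum>s\<in>S. b s a *\<^sub>R u s)" unfolding ua_def using baa by simp
    then show ?thesis unfolding sum_insert_scaleR_fun_upd[OF S] using True by simp
  next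
    case False
    then have "t \<in> S" using t by simp
    have expand: "(\<Sum>s\<in>S. (b s t - b s a * b a t / b a a) *\<^sub>R u s)
        = (\<Sum>s\<in>S. b s t *\<^sub>R u s) - (b a t / b a a) *\<^sub>R (\<Sum>s\<in>S. b s a *\<^sub>R u s)"
      by (simp add: scaleR_diff_left sum_subtractf scaleR_sum_right mult_ac sym)
    have "(\<Sum>s\<in>S. (b s t - b s a * b a t / b a a) *\<^sub>R u s) = c t - (b a t / b a a) *\<^sub>R c a"
      using u \<open>t \<in> S\<close> by blast
    then have "(\<Sum>s\<in>S. b s t *\<^sub>R u s) = c t - (b a t / b a a) *\<^sub>R c a + (b a t / b a a) *\<^sub>R (\<Sum>s\<in>S. b s a *\<^sub>R u s)"
      unfolding expand by (simp add: diff_eq_eq)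
    moreover have "b a t *\<^sub>R ua = (b a t / b a a) *\<^sub>R c a - (b a t / b a a) *\<^sub>R (\<Sum>s\<in>S. b s a *\<^sub>R u s)"
      unfolding ua_def by (simp add: scaleR_diff_right)
    ultimately show ?thesis unfolding sum_insert_scaleR_fun_upd[OF S] by simp
  qed
qed

lemma psd_kernel_fun_upd:
  fixes c :: "'a \<Rightarrow> 'h::real_vector"
  assumes S: "finite S" "a \<notin> S"
    and ker: "\<And>v. quad_form b (insert a S) v = 0 \<Longrightarrow> (\<Sum>s\<in>insert a S. v s *\<^sub>R c s) = 0"
    and zero: "quad_form b (insert a S) (v(a := x)) = 0"
  shows "(\<Sum>s\<in>S. v s *\<^sub>R c s) = - x *\<^sub>R c a"
proof -
  have "(\<Sum>s\<in>S. (v(a := x)) s *\<^sub>R c s) = (\<Sum>s\<in>S. v s *\<^sub>R c s)"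
    using S by (intro sum.cong) auto
  then show ?thesis using ker[OF zero] S by (simp add: eq_neg_iff_add_eq_0 add.commute)
qed

lemma psd_zero_pivot_reduce:
  fixes c :: "'a \<Rightarrow> 'h::real_vector"
  assumes S: "finite S" "a \<notin> S" and sym: "\<And>s t. b s t = b t s"
    and psd: "\<And>v. quad_form b (insert a S) v \<ge> 0"
    and ker: "\<And>v. quad_form b (insert a S) v = 0 \<Longrightarrow> (\<Sum>s\<in>insert a S. v s *\<^sub>R c s) = 0"
    and baa: "b a a = 0"
  shows "c a = 0" and "quad_form b S v \<ge> 0" and "quad_form b S v = 0 \<Longrightarrow> (\<Sum>s\<in>S. v s *\<^sub>R c s) = 0"
proof -
  have "quad_form b (insert a S) ((\<lambda>_. 0)(a := 1)) = 0"
    using quad_form_insert[where b=b, OF S sym, where v="\<lambda>_. 0" and x=1] baa by (simp add: quad_form_def)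
  from psd_kernel_fun_upd[where b=b and c=c, OF S ker this] show "c a = 0" by simp
  have restrict: "quad_form b (insert a S) (v(a := 0)) = quad_form b S v"
    using quad_form_insert[where b=b, OF S sym, where v=v and x=0] by simp
  show "quad_form b S v \<ge> 0" using psd[of "v(a := 0)"] unfolding restrict .
  show "quad_form b S v = 0 \<Longrightarrow> (\<Sum>s\<in>S. v s *\<^sub>R c s) = 0"
    using psd_kernel_fun_upd[where b=b and c=c, OF S ker, where v=v and x=0] unfolding restrict by simp
qed

lemma psd_schur_reduce:
  fixes c :: "'a \<Rightarrow> 'h::real_vector"
  assumes S: "finite S" "a \<notin> S" and sym: "\<And>s t. b s t = b t s"
    and psd: "\<And>v. quad_form b (insert a S) v \<ge> 0"
    and ker: "\<And>v. quad_form b (insert a S) v = 0 \<Longrightarrow> (\<Sum>s\<in>insert a S. v s *\<^sub>R c s) = 0"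
    and baa: "b a a \<noteq> 0"
  shows "quad_form (\<lambda>s t. b s t - b s a * b a t / b a a) S v \<ge> 0"
    and "quad_form (\<lambda>s t. b s t - b s a * b a t / b a a) S v = 0 \<Longrightarrow>
      (\<Sum>s\<in>S. v s *\<^sub>R (c s - (b a s / b a a) *\<^sub>R c a)) = 0"
proof -
  note schur = quad_form_schur_complement[where b=b, OF S sym baa]
  show "quad_form (\<lambda>s t. b s t - b s a * b a t / b a a) S v \<ge> 0" unfolding schur by (rule psd)
  assume "quad_form (\<lambda>s t. b s t - b s a * b a t / b a a) S v = 0"
  then have "(\<Sum>s\<in>S. v s *\<^sub>R c s) = ((\<Sum>t\<in>S. b a t * v t) / b a a) *\<^sub>R c a"
    using psd_kernel_fun_upd[where b=b and c=c, OF S ker] unfolding schur by simp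
  then show "(\<Sum>s\<in>S. v s *\<^sub>R (c s - (b a s / b a a) *\<^sub>R c a)) = 0"
    by (simp add: scaleR_diff_right sum_subtractf scaleR_sum_left[symmetric] sum_divide_distrib mult_ac)
qed

text \<open>Gaussian elimination: a vanishing pivot forces its whole row and the corresponding entry
  of the right-hand side to vanish; otherwise one eliminates through the Schur complement.\<close>

lemma psd_system_solvable:
  fixes b :: "'a \<Rightarrow> 'a \<Rightarrow> real" and c :: "'a \<Rightarrow> 'h::real_vector"
  assumes "finite S" and "\<And>s t. b s t = b t s" and "\<And>v. quad_form b S v \<ge> 0"
    and "\<And>v. quad_form b S v = 0 \<Longrightarrow> (\<Sum>s\<in>S. v s *\<^sub>R c s) = 0"
  shows "\<exists>u. \<forall>t\<in>S. (\<Sum>s\<in>S. b s t *\<^sub>R u s) = c t"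
  using assms
proof (induction S arbitrary: b c rule: finite_induct)
  case empty
  then show ?case by auto
next
  case (insert a S b c)
  note S = insert(1,2) and sym = insert(4) and psd = insert(5) and ker = insert(6)
  show ?case
  proof (cases "b a a = 0")
    case True
    note reduce = psd_zero_pivot_reduce[where b=b and c=c, OF S sym psd ker True]
    have "\<exists>u. \<forall>t\<in>S. (\<Sum>s\<in>S. b s t *\<^sub>R u s) = c t"
      using reduce(2,3) by (rule insert.IH[OF sym])
    then show ?thesis
      using solution_extend_zero_pivot[where b=b and c=c, OF S sym psd_zero_diagonal_row[where b=b, OF S sym psd True]
          reduce(1)]
      by blast
  next
    case False
    note reduce = psd_schur_reduce[where b=b and c=c, OF S sym psd ker False]
    have "\<exists>u. \<forall>t\<in>S. (\<Sum>s\<in>S. (b s t - b s a * b a t / b a a) *\<^sub>R u s) = c t - (b a t / b a a) *\<^sub>R c a"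
      by (rule insert.IH) (use sym reduce in \<open>auto simp: mult.commute\<close>)
    then show ?thesis
      using solution_extend_pivot[where b=b and c=c, OF S sym False] by blast
  qed
qed

lemma (in product_sigma_finite) product_integral_prod_normalized:
  fixes f :: "'i \<Rightarrow> 'a \<Rightarrow> real"
  assumes J: "finite J" and A: "A \<subseteq> J" and int: "\<And>q. q \<in> J \<Longrightarrow> integrable (M q) (f q)"
    and one: "\<And>q. q \<in> J - A \<Longrightarrow> integral\<^sup>L (M q) (f q) = 1"
  shows "integral\<^sup>L (Pi\<^sub>M J M) (\<lambda>x. \<Prod>q\<in>J. f q (x q)) = (\<Prod>q\<in>A. integral\<^sup>L (M q) (f q))"
proof -
  have "integral\<^sup>L (Pi\<^sub>M J M) (\<lambda>x. \<Prod>q\<in>J. f q (x q)) = (\<Prod>q\<in>J. integral\<^sup>L (M q) (f q))"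
    by (rule product_integral_prod[OF J int])
  also have "\<dots> = (\<Prod>q\<in>A. integral\<^sup>L (M q) (f q))"
    using J A one by (intro prod.mono_neutral_right) auto
  finally show ?thesis .
qed

lemma power2_norm_sum:
  fixes F :: "'j \<Rightarrow> 'a::real_inner"
  assumes "finite J"
  shows "(norm (\<Sum>j\<in>J. F j))\<^sup>2 = (\<Sum>j\<in>J. (norm (F j))\<^sup>2) + (\<Sum>j\<in>J. \<Sum>m\<in>J-{j}. inner (F j) (F m))"
proof -
  have "(norm (\<Sum>j\<in>J. F j))\<^sup>2 = (\<Sum>j\<in>J. \<Sum>m\<in>J. inner (F j) (F m))"
    unfolding power2_norm_eq_inner inner_sum_left inner_sum_right by (rule sum.swap)
  also have "\<dots> = (\<Sum>j\<in>J. inner (F j) (F j) + (\<Sum>m\<in>J-{j}. inner (F j) (F m)))"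
    using assms by (intro sum.cong refl) (simp add: sum.remove)
  finally show ?thesis by (simp add: sum.distrib power2_norm_eq_inner)
qed

lemma
  fixes f :: "'i \<Rightarrow> 'j \<Rightarrow> 'a \<Rightarrow> 'b::{banach,second_countable_topology}"
  assumes int: "\<And>i j. i \<in> A \<Longrightarrow> j \<in> B i \<Longrightarrow> integrable M (f i j)"
  shows integrable_sum_sum: "integrable M (\<lambda>x. \<Sum>i\<in>A. \<Sum>j\<in>B i. f i j x)"
    and integral_sum_sum: "(\<integral>x. (\<Sum>i\<in>A. \<Sum>j\<in>B i. f i j x) \<partial>M) = (\<Sum>i\<in>A. \<Sum>j\<in>B i. integral\<^sup>L M (f i j))"
proof -
  have inner: "integrable M (\<lambda>x. \<Sum>j\<in>B i. f i j x)" if "i \<in> A" for i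
    by (rule Bochner_Integration.integrable_sum, rule int[OF that])
  then show "integrable M (\<lambda>x. \<Sum>i\<in>A. \<Sum>j\<in>B i. f i j x)" by (rule Bochner_Integration.integrable_sum)
  show "(\<integral>x. (\<Sum>i\<in>A. \<Sum>j\<in>B i. f i j x) \<partial>M) = (\<Sum>i\<in>A. \<Sum>j\<in>B i. integral\<^sup>L M (f i j))"
    using inner int by (simp add: Bochner_Integration.integral_sum)
qed

lemma integrable_scaleR_dominated:
  fixes g :: "'a \<Rightarrow> 'b::{banach,second_countable_topology}"
  assumes int: "integrable M (\<lambda>t. T t *\<^sub>R g t)" and T: "T \<in> borel_measurable M"
    and k: "k \<in> borel_measurable M" and bound: "\<And>t. 0 \<le> k t \<and> k t \<le> c * T t" and c: "c > 0"
  shows "integrable M (\<lambda>t. k t *\<^sub>R g t)"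
proof (rule Bochner_Integration.integrable_bound[OF integrable_scaleR_right[OF int, of c]])
  have "k t *\<^sub>R g t = (k t / T t) *\<^sub>R (T t *\<^sub>R g t)" for t
    using bound[of t] c by (cases "T t = 0") auto
  then have "(\<lambda>t. k t *\<^sub>R g t) = (\<lambda>t. (k t / T t) *\<^sub>R (T t *\<^sub>R g t))" by auto
  then show "(\<lambda>t. k t *\<^sub>R g t) \<in> borel_measurable M"
    by (simp only:) (intro borel_measurable_scaleR borel_measurable_divide T k borel_measurable_integrable[OF int])
  show "AE t in M. norm (k t *\<^sub>R g t) \<le> norm (c *\<^sub>R (T t *\<^sub>R g t))"
  proof (rule AE_I2)
    fix t
    have "k t * norm (g t) \<le> c * T t * norm (g t)" using bound[of t] by (intro mult_right_mono) auto
    then show "norm (k t *\<^sub>R g t) \<le> norm (c *\<^sub>R (T t *\<^sub>R g t))"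
      using bound[of t] c by (simp add: mult.assoc)
  qed
qed

section \<open>Kernel weights\<close>

lemma enorm_nonneg: "enorm L' v \<ge> 0"
  unfolding enorm_def by (simp add: sum_nonneg)

lemma enorm_commute: "enorm L' (\<lambda>k. x k - u k) = enorm L' (\<lambda>k. u k - x k)"
  unfolding enorm_def by (simp add: power2_commute)

lemma enorm_measurable: "(\<lambda>x. enorm L' (\<lambda>k. x k - u k)) \<in> borel_measurable (Leb L')"
proof -
  have "(\<lambda>x. x k - u k) \<in> borel_measurable (Leb L')" if "k \<in> {..<L'}" for k
    unfolding Leb_def using that by measurable
  then show ?thesis unfolding enorm_def by measurable
qed

locale sbf =
  fixes d n :: nat and L :: "nat \<Rightarrow> nat" and D :: "nat \<Rightarrow> (nat \<Rightarrow> real) set"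
    and h :: "nat \<Rightarrow> real" and K :: "nat \<Rightarrow> real \<Rightarrow> real" and \<xi> :: "nat \<Rightarrow> nat \<Rightarrow> (nat \<Rightarrow> real)"
  assumes D_space: "\<And>j. j \<in> {1..d} \<Longrightarrow> D j \<subseteq> space (Leb (L j))"
    and D_pos: "\<And>j. j \<in> {1..d} \<Longrightarrow> measure (Leb (L j)) (D j) > 0"
    and some_in_D: "\<exists>i\<in>{1..n}. inD d D \<xi> i"
    and h_pos: "\<And>j. j \<in> {1..d} \<Longrightarrow> h j > 0"
    and K_cont: "\<And>j. j \<in> {1..d} \<Longrightarrow> continuous_on {0..} (K j)"
    and K_nonneg: "\<And>j u. j \<in> {1..d} \<Longrightarrow> u \<ge> 0 \<Longrightarrow> K j u \<ge> 0"
    and K_pos: "\<And>j u. j \<in> {1..d} \<Longrightarrow> 0 \<le> u \<Longrightarrow> u < 1 \<Longrightarrow> K j u > 0"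
    and K_zero: "\<And>j u. j \<in> {1..d} \<Longrightarrow> u \<ge> 1 \<Longrightarrow> K j u = 0"
    and condA: "\<And>j x. j \<in> {1..d} \<Longrightarrow> x \<in> D j \<Longrightarrow>
      \<exists>i\<in>{1..n}. inD d D \<xi> i \<and> enorm (L j) (\<lambda>k. \<xi> i j k - x k) < h j"
begin

abbreviation "J \<equiv> {1..d}"

definition "I = {i\<in>{1..n}. inD d D \<xi> i}"

definition "N = real (card I)"

text \<open>Outside J the marginal is the null measure, so that M is a family of finite measures
  indexed by all of nat, as required for product measures.\<close>
definition "M j = restrict_space (Leb (L j)) (if j \<in> J then D j else {})"

definition "kmass j u = (LINT t:D j|Leb (L j). inverse (h j ^ L j) * K j (enorm (L j) (\<lambda>k. t k - u k) / h j))"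

definition "kern j i x = KH L D h K j x (\<xi> i j)"

definition "ksum j x = (\<Sum>i\<in>I. kern j i x)"

definition "w j i x = kern j i x / ksum j x"

lemma kern_eq: "kern j i x =
    (if kmass j (\<xi> i j) \<noteq> 0 then inverse (h j ^ L j) * K j (enorm (L j) (\<lambda>k. x k - \<xi> i j k) / h j) / kmass j (\<xi> i j)
     else inverse (measure (Leb (L j)) (D j)))"
  by (simp add: kern_def KH_def Kh_def kmass_def Let_def)

lemma finite_I: "finite I"
  unfolding I_def by auto

lemma N_pos: "N > 0"
  using finite_I some_in_D unfolding N_def I_def by (auto simp: card_gt_0_iff)

lemma data_in_D: "i \<in> I \<Longrightarrow> j \<in> J \<Longrightarrow> \<xi> i j \<in> D j"
  unfolding I_def inD_def by auto

text \<open>Positive measure already forces D j to be measurable with finite Lebesgue measure, since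
  measure is 0 on non-measurable sets and on sets of infinite measure.\<close>

lemma D_sets: "j \<in> J \<Longrightarrow> D j \<in> sets (Leb (L j))"
  using D_pos measure_notin_sets by force

lemma D_finite: "j \<in> J \<Longrightarrow> emeasure (Leb (L j)) (D j) < \<infinity>"
  using D_pos[of j] by (auto simp: measure_def less_top[symmetric])

lemma space_M: "j \<in> J \<Longrightarrow> space (M j) = D j"
  using D_space unfolding M_def by (auto simp: space_restrict_space)

lemma M_eq: "j \<in> J \<Longrightarrow> M j = restrict_space (Leb (L j)) (D j)"
  unfolding M_def by simp

lemma D_inter_space: "j \<in> J \<Longrightarrow> D j \<inter> space (Leb (L j)) \<in> sets (Leb (L j))"
  using D_sets D_space by (simp add: Int_absorb2)

lemma finite_measure_M: "finite_measure (M j)"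
proof (cases "j \<in> J")
  case True
  then have "emeasure (M j) (space (M j)) = emeasure (Leb (L j)) (D j)"
    using D_inter_space D_space
    by (simp add: M_eq emeasure_restrict_space space_restrict_space Int_absorb2)
  then show ?thesis using D_finite[OF True] by (intro finite_measureI) simp
next
  case False
  then have "(if j \<in> J then D j else {}) = {}" by (rule if_not_P)
  then show ?thesis unfolding M_def by (intro finite_measureI) (simp add: space_restrict_space)
qed

lemma product_sigma_finite_M: "product_sigma_finite M"
  unfolding product_sigma_finite_def using finite_measure_M by (simp add: finite_measure_def)

lemma measure_space_M: "j \<in> J \<Longrightarrow> measure (M j) (space (M j)) = measure (Leb (L j)) (D j)"
  using D_sets D_space unfolding M_def
  by (simp add: measure_restrict_space space_restrict_space Int_absorb2)

lemma measurable_M: "f \<in> borel_measurable (Leb (L j)) \<Longrightarrow> f \<in> borel_measurable (M j)"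
  unfolding M_def by (rule measurable_restrict_space1)

lemma integral_M:
  fixes f :: "_ \<Rightarrow> 'b::{banach,second_countable_topology}"
  shows "j \<in> J \<Longrightarrow> integral\<^sup>L (M j) f = (LINT x:D j|Leb (L j). f x)"
  unfolding M_eq set_lebesgue_integral_def using integral_restrict_space[OF D_inter_space, of j f]
  by simp

lemma integrable_M:
  fixes f :: "_ \<Rightarrow> 'b::{banach,second_countable_topology}"
  shows "j \<in> J \<Longrightarrow> integrable (M j) f = set_integrable (Leb (L j)) (D j) f"
  unfolding M_eq set_integrable_def using integrable_restrict_space[OF D_inter_space, of j f]
  by simp

lemma integral_cong_D:
  fixes f g :: "_ \<Rightarrow> 'b::{banach,second_countable_topology}"
  shows "j \<in> J \<Longrightarrow> (\<And>x. x \<in> D j \<Longrightarrow> f x = g x) \<Longrightarrow> integral\<^sup>L (M j) f = integral\<^sup>L (M j) g"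
  by (rule Bochner_Integration.integral_cong) (auto simp: space_M)

lemma K_scaled_measurable:
  assumes j: "j \<in> J"
  shows "(\<lambda>x. K j (enorm (L j) (\<lambda>k. x k - u k) / h j)) \<in> borel_measurable (Leb (L j))"
proof -
  have cont: "continuous_on UNIV (\<lambda>y. K j (max 0 y))"
    by (rule continuous_on_compose2[OF K_cont[OF j]]) (auto intro!: continuous_intros)
  have "(\<lambda>x. enorm (L j) (\<lambda>k. x k - u k) / h j) \<in> borel_measurable (Leb (L j))"
    using enorm_measurable by measurable
  from borel_measurable_continuous_on[OF cont this]
  show ?thesis using h_pos[OF j] by (simp add: max_def enorm_nonneg)
qed

lemma K_bounded: "j \<in> J \<Longrightarrow> \<exists>B. \<forall>u\<ge>0. K j u \<le> B"
proof -
  assume j: "j \<in> J"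
  have "compact (K j ` {0..1})"
    by (rule compact_continuous_image) (auto intro: continuous_on_subset[OF K_cont[OF j]])
  then obtain B where B: "\<forall>y\<in>K j ` {0..1}. norm y \<le> B"
    using compact_imp_bounded bounded_iff by metis
  have "K j u \<le> max B 0" if "u \<ge> 0" for u
  proof (cases "u \<le> 1")
    case True
    then have "norm (K j u) \<le> B" using B that by auto
    then show ?thesis by auto
  qed (simp add: K_zero[OF j])
  then show ?thesis by blast
qed

lemma kmass_nonneg: "j \<in> J \<Longrightarrow> kmass j u \<ge> 0"
  unfolding kmass_def set_lebesgue_integral_def
  using K_nonneg h_pos
  by (intro integral_nonneg_AE AE_I2) (auto simp: indicator_def enorm_nonneg less_imp_le)

lemma kern_measurable: "j \<in> J \<Longrightarrow> kern j i \<in> borel_measurable (Leb (L j))"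
  using K_scaled_measurable[of j "\<xi> i j"] unfolding kern_eq[abs_def] by measurable

lemma kern_nonneg: assumes j: "j \<in> J" shows "kern j i x \<ge> 0"
proof -
  have "K j (enorm (L j) (\<lambda>k. x k - \<xi> i j k) / h j) \<ge> 0"
    using K_nonneg[OF j] h_pos[OF j] by (simp add: enorm_nonneg)
  then show ?thesis
    using kmass_nonneg[OF j, of "\<xi> i j"] h_pos[OF j] D_pos[OF j] unfolding kern_eq by auto
qed

lemma kern_bounded: assumes j: "j \<in> J" shows "\<exists>B. \<forall>x. kern j i x \<le> B"
proof -
  obtain B where B: "\<forall>u\<ge>0. K j u \<le> B" using K_bounded j by blast
  have "kern j i x \<le> max (inverse (h j ^ L j) * B / kmass j (\<xi> i j)) (inverse (measure (Leb (L j)) (D j)))"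
    for x
  proof (cases "kmass j (\<xi> i j) = 0")
    case False
    then have "kmass j (\<xi> i j) > 0" using kmass_nonneg[OF j, of "\<xi> i j"] by auto
    moreover have "K j (enorm (L j) (\<lambda>k. x k - \<xi> i j k) / h j) \<le> B"
      using B h_pos[OF j] by (simp add: enorm_nonneg)
    ultimately have "inverse (h j ^ L j) * K j (enorm (L j) (\<lambda>k. x k - \<xi> i j k) / h j) / kmass j (\<xi> i j)
        \<le> inverse (h j ^ L j) * B / kmass j (\<xi> i j)"
      using h_pos[OF j] by (intro divide_right_mono mult_left_mono) auto
    then show ?thesis using False unfolding kern_eq by auto
  qed (simp add: kern_eq)
  then show ?thesis by blast
qed

lemma kern_pos:
  assumes j: "j \<in> J" and near: "enorm (L j) (\<lambda>k. \<xi> i j k - x k) < h j"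
  shows "kern j i x > 0"
proof (cases "kmass j (\<xi> i j) = 0")
  case False
  then have "kmass j (\<xi> i j) > 0" using kmass_nonneg[OF j, of "\<xi> i j"] by auto
  moreover have "K j (enorm (L j) (\<lambda>k. x k - \<xi> i j k) / h j) > 0"
    using K_pos[OF j] near h_pos[OF j] enorm_commute[of "L j" x "\<xi> i j"] by (simp add: enorm_nonneg)
  ultimately show ?thesis using False h_pos[OF j] unfolding kern_eq by auto
qed (use D_pos[OF j] in \<open>simp add: kern_eq\<close>)

lemma integral_kern: assumes j: "j \<in> J" and i: "i \<in> I" shows "integral\<^sup>L (M j) (kern j i) = 1"
proof (cases "kmass j (\<xi> i j) = 0")
  case False
  have "integral\<^sup>L (M j) (kern j i) =
      integral\<^sup>L (M j) (\<lambda>x. inverse (h j ^ L j) * K j (enorm (L j) (\<lambda>k. x k - \<xi> i j k) / h j)) / kmass j (\<xi> i j)"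
    unfolding kern_eq using False by simp
  also have "integral\<^sup>L (M j) (\<lambda>x. inverse (h j ^ L j) * K j (enorm (L j) (\<lambda>k. x k - \<xi> i j k) / h j))
      = kmass j (\<xi> i j)"
    unfolding integral_M[OF j] kmass_def ..
  finally show ?thesis using False by simp
next
  case True
  then show ?thesis unfolding kern_eq using measure_space_M[OF j] D_pos[OF j] by simp
qed

definition bounded_meas :: "nat \<Rightarrow> ((nat \<Rightarrow> real) \<Rightarrow> real) \<Rightarrow> bool" where
  "bounded_meas j f \<longleftrightarrow> f \<in> borel_measurable (M j) \<and> (\<exists>B. \<forall>x\<in>space (M j). \<bar>f x\<bar> \<le> B)"

lemma bounded_meas_integrable: "bounded_meas j f \<Longrightarrow> integrable (M j) f"
proof -
  assume "bounded_meas j f"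
  then obtain B where "f \<in> borel_measurable (M j)" "\<forall>x\<in>space (M j). \<bar>f x\<bar> \<le> B"
    unfolding bounded_meas_def by blast
  then show ?thesis
    by (intro finite_measure.integrable_const_bound[OF finite_measure_M, of _ B]) auto
qed

lemma bounded_meas_measurable: "bounded_meas j f \<Longrightarrow> f \<in> borel_measurable (M j)"
  unfolding bounded_meas_def by auto

lemma bounded_meas_const [intro]: "bounded_meas j (\<lambda>_. c)"
  unfolding bounded_meas_def by (auto intro!: exI[of _ "\<bar>c\<bar>"])

lemma bounded_meas_add [intro]: "bounded_meas j f \<Longrightarrow> bounded_meas j g \<Longrightarrow> bounded_meas j (\<lambda>x. f x + g x)"
  unfolding bounded_meas_def
proof (safe, goal_cases)
  case (2 B1 B2)
  then show ?case by (intro exI[of _ "B1 + B2"]) (auto intro: abs_triangle_ineq[THEN order_trans] add_mono)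
qed auto

lemma bounded_meas_mult [intro]: "bounded_meas j f \<Longrightarrow> bounded_meas j g \<Longrightarrow> bounded_meas j (\<lambda>x. f x * g x)"
  unfolding bounded_meas_def
proof (safe, goal_cases)
  case (2 B1 B2)
  then show ?case by (intro exI[of _ "B1 * B2"]) (auto simp: abs_mult intro!: mult_mono)
qed auto

lemma bounded_meas_sum [intro]:
  "finite A \<Longrightarrow> (\<And>a. a \<in> A \<Longrightarrow> bounded_meas j (f a)) \<Longrightarrow> bounded_meas j (\<lambda>x. \<Sum>a\<in>A. f a x)"
  by (induction A rule: finite_induct) auto

lemma integral_sum_bounded_meas:
  fixes f :: "'c \<Rightarrow> (nat \<Rightarrow> real) \<Rightarrow> real"
  shows "finite A \<Longrightarrow> (\<And>a. a \<in> A \<Longrightarrow> bounded_meas j (f a)) \<Longrightarrow>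
    (\<integral>x. (\<Sum>a\<in>A. f a x) \<partial>M j) = (\<Sum>a\<in>A. integral\<^sup>L (M j) (f a))"
  by (rule Bochner_Integration.integral_sum) (auto intro: bounded_meas_integrable)

lemma integral_sum_scaleR_bounded_meas:
  fixes c :: "'a \<Rightarrow> 'h::{banach,second_countable_topology}"
  assumes A: "finite A" and g: "\<And>a. a \<in> A \<Longrightarrow> bounded_meas m (g a)"
  shows "integrable (M m) (\<lambda>t. \<Sum>a\<in>A. g a t *\<^sub>R c a)"
    and "integral\<^sup>L (M m) (\<lambda>t. \<Sum>a\<in>A. g a t *\<^sub>R c a) = (\<Sum>a\<in>A. integral\<^sup>L (M m) (g a) *\<^sub>R c a)"
proof -
  have int: "\<And>a. a \<in> A \<Longrightarrow> integrable (M m) (\<lambda>t. g a t *\<^sub>R c a)"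
    using g by (intro integrable_scaleR_left bounded_meas_integrable)
  then show "integrable (M m) (\<lambda>t. \<Sum>a\<in>A. g a t *\<^sub>R c a)" by auto
  show "integral\<^sup>L (M m) (\<lambda>t. \<Sum>a\<in>A. g a t *\<^sub>R c a) = (\<Sum>a\<in>A. integral\<^sup>L (M m) (g a) *\<^sub>R c a)"
    using int g by (simp add: Bochner_Integration.integral_sum bounded_meas_integrable)
qed

lemma bounded_meas_kern [intro]: "j \<in> J \<Longrightarrow> bounded_meas j (kern j i)"
  using kern_bounded[of j i] kern_nonneg[of j i] measurable_M[OF kern_measurable]
  unfolding bounded_meas_def by (metis abs_of_nonneg)

lemma kern_le_ksum: "j \<in> J \<Longrightarrow> i \<in> I \<Longrightarrow> kern j i x \<le> ksum j x"
  unfolding ksum_def using finite_I kern_nonneg by (intro member_le_sum) auto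

lemma ksum_pos: assumes j: "j \<in> J" and x: "x \<in> D j" shows "ksum j x > 0"
proof -
  obtain i where "i \<in> {1..n}" "inD d D \<xi> i" and near: "enorm (L j) (\<lambda>k. \<xi> i j k - x k) < h j"
    using condA[OF j x] by blast
  then have "i \<in> I" unfolding I_def by auto
  then show ?thesis using kern_pos[OF j near] kern_le_ksum[OF j, of i x] by linarith
qed

lemma ksum_nonneg: "j \<in> J \<Longrightarrow> ksum j x \<ge> 0"
  unfolding ksum_def using kern_nonneg by (simp add: sum_nonneg)

lemma w_nonneg: "j \<in> J \<Longrightarrow> w j i x \<ge> 0"
  unfolding w_def using kern_nonneg ksum_nonneg by simp

lemma w_le_1: assumes j: "j \<in> J" and i: "i \<in> I" shows "w j i x \<le> 1"
proof -
  have "kern j i x \<le> ksum j x" "ksum j x \<ge> 0"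
    using kern_le_ksum[OF j i] ksum_nonneg[OF j] .
  then show ?thesis unfolding w_def by (cases "ksum j x = 0") simp_all
qed

lemma sum_w: "j \<in> J \<Longrightarrow> x \<in> D j \<Longrightarrow> (\<Sum>i\<in>I. w j i x) = 1"
  unfolding w_def using ksum_pos[of j x] by (simp add: sum_divide_distrib[symmetric] ksum_def[symmetric])

lemma ksum_mult_w: "j \<in> J \<Longrightarrow> x \<in> D j \<Longrightarrow> ksum j x * w j i x = kern j i x"
  unfolding w_def using ksum_pos[of j x] by simp

lemma bounded_meas_ksum [intro]: "j \<in> J \<Longrightarrow> bounded_meas j (ksum j)"
  unfolding ksum_def[abs_def] by (intro bounded_meas_sum finite_I bounded_meas_kern)

lemma bounded_meas_w [intro]: assumes j: "j \<in> J" and i: "i \<in> I" shows "bounded_meas j (w j i)"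
proof -
  have "w j i \<in> borel_measurable (M j)"
    unfolding w_def[abs_def]
    using bounded_meas_measurable[OF bounded_meas_kern[OF j]] bounded_meas_measurable[OF bounded_meas_ksum[OF j]]
    by measurable
  then show ?thesis
    unfolding bounded_meas_def using w_nonneg[OF j] w_le_1[OF j i] by (intro conjI exI[of _ 1]) auto
qed

definition "C j i l = (\<integral>x. kern j i x * w j l x \<partial>M j)"

definition "Q j r i l = (\<integral>x. kern j r x * w j i x * w j l x \<partial>M j)"

lemma C_sym: "C j i l = C j l i"
  unfolding C_def w_def by (simp add: mult.commute)

lemma Q_sym: "Q j r i l = Q j r l i"
  unfolding Q_def by (simp add: mult_ac)

lemma sum_C_row: assumes j: "j \<in> J" and i: "i \<in> I" shows "(\<Sum>l\<in>I. C j i l) = 1"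
proof -
  have "(\<Sum>l\<in>I. C j i l) = (\<integral>x. (\<Sum>l\<in>I. kern j i x * w j l x) \<partial>M j)"
    unfolding C_def using j by (intro integral_sum_bounded_meas[symmetric] finite_I bounded_meas_mult) auto
  also have "\<dots> = integral\<^sup>L (M j) (kern j i)"
    using j by (intro integral_cong_D) (auto simp: sum_distrib_left[symmetric] sum_w)
  finally show ?thesis using integral_kern[OF j i] by simp
qed

lemma sum_C_column: "j \<in> J \<Longrightarrow> i \<in> I \<Longrightarrow> (\<Sum>l\<in>I. C j l i) = 1"
  using sum_C_row[of j i] C_sym[of j i] by simp

lemma sum_Q: assumes j: "j \<in> J" and i: "i \<in> I" and l: "l \<in> I"
  shows "(\<Sum>r\<in>I. Q j r i l) = C j i l"
proof -
  have "(\<Sum>r\<in>I. Q j r i l) = (\<integral>x. (\<Sum>r\<in>I. kern j r x * w j i x * w j l x) \<partial>M j)"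
    unfolding Q_def using j i l by (intro integral_sum_bounded_meas[symmetric] finite_I bounded_meas_mult) auto
  also have "\<dots> = C j i l"
    unfolding C_def using j
    by (intro integral_cong_D) (auto simp: sum_distrib_right[symmetric] ksum_def[symmetric] ksum_mult_w)
  finally show ?thesis .
qed

lemma integral_ksum_w: assumes j: "j \<in> J" and i: "i \<in> I"
  shows "(\<integral>x. ksum j x / N * w j i x \<partial>M j) = 1 / N"
proof -
  have "(\<integral>x. ksum j x / N * w j i x \<partial>M j) = (\<integral>x. kern j i x / N \<partial>M j)"
    using j by (intro integral_cong_D) (auto simp: ksum_mult_w[symmetric])
  also have "\<dots> = 1 / N" using integral_kern[OF j i] by simp
  finally show ?thesis .
qed

lemma integral_ksum: assumes j: "j \<in> J" shows "(\<integral>x. ksum j x / N \<partial>M j) = 1"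
proof -
  have "(\<integral>x. ksum j x / N \<partial>M j) = (\<Sum>i\<in>I. integral\<^sup>L (M j) (kern j i) / N)"
    unfolding ksum_def sum_divide_distrib using j
    by (subst integral_sum_bounded_meas) (auto intro!: finite_I bounded_meas_mult simp: divide_inverse)
  also have "\<dots> = 1" using integral_kern[OF j] N_pos by (simp add: N_def)
  finally show ?thesis .
qed

lemma sum_in_D:
  fixes g :: "nat \<Rightarrow> 'a::comm_monoid_add"
  shows "(\<Sum>i\<in>{1..n}. if inD d D \<xi> i then g i else 0) = (\<Sum>i\<in>I. g i)"
  unfolding I_def by (rule sum.inter_filter[symmetric]) simp

lemma sum_mult_in_D: "(\<Sum>i\<in>{1..n}. g i * of_bool (inD d D \<xi> i)) = (\<Sum>i\<in>I. g i :: real)"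
  unfolding sum_in_D[symmetric] by (intro sum.cong) auto

lemma sum_scaleR_in_D:
  "(\<Sum>i\<in>{1..n}. (g i * of_bool (inD d D \<xi> i)) *\<^sub>R (Z i :: 'a::real_vector)) = (\<Sum>i\<in>I. g i *\<^sub>R Z i)"
  "(\<Sum>i\<in>{1..n}. of_bool (inD d D \<xi> i) *\<^sub>R (Z i :: 'a::real_vector)) = (\<Sum>i\<in>I. Z i)"
  unfolding sum_in_D[symmetric] by (intro sum.cong; auto)+

lemma p0_mult_n: "p0 d D n \<xi> * real n = N"
proof -
  have "n > 0" using some_in_D by auto
  moreover have "(\<Sum>i\<in>{1..n}. of_bool (inD d D \<xi> i) :: real) = N"
    unfolding N_def I_def by (simp add: Int_def Collect_conj_eq[symmetric] conj_commute)
  ultimately show ?thesis unfolding p0_def by simp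
qed

lemma pj_eq: "pj d L D h K n \<xi> j x = ksum j x / N"
  unfolding pj_def p0_mult_n ksum_def KH_def[symmetric] kern_def[symmetric] sum_mult_in_D
  by (simp add: divide_inverse mult.commute)

lemma pjk_div_pj: "pjk d L D h K n \<xi> j m x t / pj d L D h K n \<xi> j x = (\<Sum>i\<in>I. w j i x * kern m i t)"
proof -
  have "pjk d L D h K n \<xi> j m x t = (\<Sum>i\<in>I. kern j i x * kern m i t) / N"
    unfolding pjk_def p0_mult_n kern_def[symmetric] sum_mult_in_D by (simp add: divide_inverse mult.commute)
  then have "pjk d L D h K n \<xi> j m x t / pj d L D h K n \<xi> j x = (\<Sum>i\<in>I. kern j i x * kern m i t) / ksum j x"
    unfolding pj_eq using N_pos by simp
  then show ?thesis
    unfolding w_def sum_divide_distrib by simp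
qed

lemma mj_eq: "mj d L D h K n \<xi> Y j x = (\<Sum>i\<in>I. w j i x *\<^sub>R Y i)"
proof -
  have "pj d L D h K n \<xi> j x * p0 d D n \<xi> * real n = ksum j x"
    unfolding mult.assoc p0_mult_n pj_eq using N_pos by simp
  then show ?thesis
    unfolding mj_def kern_def[symmetric] sum_scaleR_in_D w_def
    by (simp add: scaleR_sum_right divide_inverse mult.commute)
qed

lemma f0_eq: "f0 d D n \<xi> Y = inverse N *\<^sub>R (\<Sum>i\<in>I. Y i)"
  unfolding f0_def p0_mult_n sum_scaleR_in_D ..

lemma pD_eq: "pD d L D h K n \<xi> x = (\<Sum>i\<in>I. \<Prod>j\<in>J. kern j i (x j)) / N"
  unfolding pD_def p0_mult_n kern_def[symmetric] sum_mult_in_D by (simp add: divide_inverse mult.commute)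

section \<open>Reduction to a finite coefficient system\<close>

definition "Ymean (Y :: nat \<Rightarrow> 'h::real_vector) = inverse N *\<^sub>R (\<Sum>i\<in>I. Y i)"

definition "Yc Y i = Y i - Ymean Y"

definition "smooth i m (\<beta> :: nat \<Rightarrow> nat \<Rightarrow> 'h::real_vector) = (\<Sum>l\<in>I. C m i l *\<^sub>R \<beta> l m)"

definition "wcomb (\<beta> :: nat \<Rightarrow> nat \<Rightarrow> 'h::real_vector) j x = (\<Sum>i\<in>I. w j i x *\<^sub>R \<beta> i j)"

definition "coef_system Y \<beta> \<longleftrightarrow> (\<forall>i\<in>I. \<forall>j\<in>J. \<beta> i j = Yc Y i - (\<Sum>m\<in>J-{j}. smooth i m \<beta>))"

lemma sum_Yc: "(\<Sum>i\<in>I. Yc Y i) = 0"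
proof -
  have "real (card I) *\<^sub>R Ymean Y = (\<Sum>i\<in>I. Y i)"
    unfolding Ymean_def using N_pos by (simp add: N_def)
  then show ?thesis unfolding Yc_def by (simp add: sum_subtractf sum_constant_scaleR)
qed

lemma sum_smooth: "m \<in> J \<Longrightarrow> (\<Sum>i\<in>I. smooth i m \<beta>) = (\<Sum>l\<in>I. \<beta> l m)"
  unfolding smooth_def by (subst sum.swap) (simp add: scaleR_sum_left[symmetric] sum_C_column)

lemma smooth_shift: "m \<in> J \<Longrightarrow> i \<in> I \<Longrightarrow> smooth i m (\<lambda>l j. \<beta> l j - c j) = smooth i m \<beta> - c m"
  unfolding smooth_def by (simp add: scaleR_diff_right sum_subtractf scaleR_sum_left[symmetric] sum_C_row)

lemma smooth_diff: "smooth i m (\<lambda>i j. \<beta> i j - \<beta>' i j) = smooth i m \<beta> - smooth i m \<beta>'"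
  unfolding smooth_def by (simp add: scaleR_diff_right sum_subtractf)

lemma wcomb_diff: "wcomb (\<lambda>i j. \<beta> i j - \<beta>' i j) j x = wcomb \<beta> j x - wcomb \<beta>' j x"
  unfolding wcomb_def by (simp add: scaleR_diff_right sum_subtractf)

lemma
  fixes \<beta> :: "nat \<Rightarrow> nat \<Rightarrow> 'h::{banach,second_countable_topology}"
  assumes m: "m \<in> J" and i: "i \<in> I"
  shows integrable_kern_wcomb: "integrable (M m) (\<lambda>t. kern m i t *\<^sub>R wcomb \<beta> m t)"
    and integral_kern_wcomb: "integral\<^sup>L (M m) (\<lambda>t. kern m i t *\<^sub>R wcomb \<beta> m t) = smooth i m \<beta>"
proof -
  have eq: "kern m i t *\<^sub>R wcomb \<beta> m t = (\<Sum>l\<in>I. (kern m i t * w m l t) *\<^sub>R \<beta> l m)" for t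
    unfolding wcomb_def by (simp add: scaleR_sum_right)
  show "integrable (M m) (\<lambda>t. kern m i t *\<^sub>R wcomb \<beta> m t)"
    unfolding eq using m by (intro integral_sum_scaleR_bounded_meas(1) finite_I bounded_meas_mult) auto
  show "integral\<^sup>L (M m) (\<lambda>t. kern m i t *\<^sub>R wcomb \<beta> m t) = smooth i m \<beta>"
    unfolding eq smooth_def C_def using m
    by (subst integral_sum_scaleR_bounded_meas(2)) (auto intro!: finite_I bounded_meas_mult)
qed

lemma
  fixes g :: "(nat \<Rightarrow> real) \<Rightarrow> 'h::{banach,second_countable_topology}"
  assumes m: "m \<in> J" and int: "\<And>i. i \<in> I \<Longrightarrow> integrable (M m) (\<lambda>t. kern m i t *\<^sub>R g t)"
  shows set_integrable_SBF_term:
      "set_integrable (Leb (L m)) (D m) (\<lambda>t. (pjk d L D h K n \<xi> j m x t / pj d L D h K n \<xi> j x) *\<^sub>R g t)"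
    and SBF_term_eq: "(LINT t:D m|Leb (L m). (pjk d L D h K n \<xi> j m x t / pj d L D h K n \<xi> j x) *\<^sub>R g t)
      = (\<Sum>i\<in>I. w j i x *\<^sub>R integral\<^sup>L (M m) (\<lambda>t. kern m i t *\<^sub>R g t))"
proof -
  have eq: "(pjk d L D h K n \<xi> j m x t / pj d L D h K n \<xi> j x) *\<^sub>R g t
      = (\<Sum>i\<in>I. w j i x *\<^sub>R (kern m i t *\<^sub>R g t))" for t
    unfolding pjk_div_pj by (simp add: scaleR_sum_left)
  show "set_integrable (Leb (L m)) (D m) (\<lambda>t. (pjk d L D h K n \<xi> j m x t / pj d L D h K n \<xi> j x) *\<^sub>R g t)"
    unfolding integrable_M[OF m, symmetric] eq
    by (intro Bochner_Integration.integrable_sum integrable_scaleR_right int)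
  show "(LINT t:D m|Leb (L m). (pjk d L D h K n \<xi> j m x t / pj d L D h K n \<xi> j x) *\<^sub>R g t)
      = (\<Sum>i\<in>I. w j i x *\<^sub>R integral\<^sup>L (M m) (\<lambda>t. kern m i t *\<^sub>R g t))"
    unfolding integral_M[OF m, symmetric] eq
    by (subst Bochner_Integration.integral_sum)
      (auto simp only: Bochner_Integration.integral_scaleR_right intro!: integrable_scaleR_right int)
qed

lemma SBF_rhs_wcomb:
  assumes j: "j \<in> J" and x: "x \<in> D j"
  shows "mj d L D h K n \<xi> Y j x - f0 d D n \<xi> Y - (\<Sum>m\<in>J-{j}. \<Sum>i\<in>I. w j i x *\<^sub>R Z i m)
    = wcomb (\<lambda>i j. Yc Y i - (\<Sum>m\<in>J-{j}. Z i m)) j x"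
proof -
  have "wcomb (\<lambda>i j. Yc Y i - (\<Sum>m\<in>J-{j}. Z i m)) j x =
      (\<Sum>i\<in>I. w j i x *\<^sub>R Y i) - (\<Sum>i\<in>I. w j i x) *\<^sub>R Ymean Y - (\<Sum>i\<in>I. \<Sum>m\<in>J-{j}. w j i x *\<^sub>R Z i m)"
    unfolding wcomb_def Yc_def
    by (simp add: scaleR_diff_right sum_subtractf scaleR_sum_right scaleR_sum_left)
  then show ?thesis
    unfolding mj_eq f0_eq Ymean_def[symmetric] sum_w[OF j x] by (simp add: sum.swap[of _ I])
qed

lemma SBF_system_wcomb:
  fixes Y :: "nat \<Rightarrow> 'h::{banach,second_countable_topology}"
  assumes sys: "coef_system Y \<beta>"
  shows "SBF_system d L D h K n \<xi> Y (wcomb \<beta>)"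
  unfolding SBF_system_def
proof (intro ballI conjI)
  fix j x assume j: "j \<in> J" and x: "x \<in> D j"
  show "set_integrable (Leb (L m)) (D m)
      (\<lambda>t. (pjk d L D h K n \<xi> j m x t / pj d L D h K n \<xi> j x) *\<^sub>R wcomb \<beta> m t)" if "m \<in> J - {j}" for m
    using that by (intro set_integrable_SBF_term integrable_kern_wcomb) auto
  have "(\<Sum>m\<in>J-{j}. LINT t:D m|Leb (L m). (pjk d L D h K n \<xi> j m x t / pj d L D h K n \<xi> j x) *\<^sub>R wcomb \<beta> m t)
      = (\<Sum>m\<in>J-{j}. \<Sum>i\<in>I. w j i x *\<^sub>R smooth i m \<beta>)"
    by (intro sum.cong refl) (simp add: SBF_term_eq integrable_kern_wcomb integral_kern_wcomb)
  moreover have "wcomb \<beta> j x = wcomb (\<lambda>i j. Yc Y i - (\<Sum>m\<in>J-{j}. smooth i m \<beta>)) j x"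
    unfolding wcomb_def using sys j unfolding coef_system_def by (intro sum.cong) auto
  ultimately show "wcomb \<beta> j x = mj d L D h K n \<xi> Y j x - f0 d D n \<xi> Y -
      (\<Sum>m\<in>J-{j}. LINT t:D m|Leb (L m). (pjk d L D h K n \<xi> j m x t / pj d L D h K n \<xi> j x) *\<^sub>R wcomb \<beta> m t)"
    using SBF_rhs_wcomb[OF j x, of Y "\<lambda>i m. smooth i m \<beta>"] by simp
qed

text \<open>The SBF equation at the data point x = xi i j bounds kern m i by a multiple of the
  integrand there, because w j i is positive at its own data point.\<close>

lemma integrable_kern_SBF_solution:
  fixes Y :: "nat \<Rightarrow> 'h::{banach,second_countable_topology}"
  assumes sys: "SBF_system d L D h K n \<xi> Y f" and j: "j \<in> J" and m: "m \<in> J - {j}" and i: "i \<in> I"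
  shows "integrable (M m) (\<lambda>t. kern m i t *\<^sub>R f m t)"
proof -
  have mJ: "m \<in> J" using m by auto
  define x where "x = \<xi> i j"
  have x: "x \<in> D j" unfolding x_def using data_in_D[OF i j] .
  define T where "T t = (\<Sum>l\<in>I. w j l x * kern m l t)" for t
  have "set_integrable (Leb (L m)) (D m) (\<lambda>t. (pjk d L D h K n \<xi> j m x t / pj d L D h K n \<xi> j x) *\<^sub>R f m t)"
    using sys j x m unfolding SBF_system_def by blast
  then have int_T: "integrable (M m) (\<lambda>t. T t *\<^sub>R f m t)"
    unfolding integrable_M[OF mJ, symmetric] pjk_div_pj T_def .
  have w_pos: "w j i x > 0"
    unfolding x_def w_def using kern_pos[OF j, of i] ksum_pos[OF j data_in_D[OF i j]] by (simp add: enorm_def h_pos[OF j])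
  have "w j i x * kern m i t \<le> T t" for t
    unfolding T_def using i finite_I w_nonneg[OF j] kern_nonneg[OF mJ]
    by (intro member_le_sum[of i I "\<lambda>l. w j l x * kern m l t"]) auto
  then have bound: "0 \<le> kern m i t \<and> kern m i t \<le> (1 / w j i x) * T t" for t
    using kern_nonneg[OF mJ] w_pos by (simp add: field_simps)
  have "T \<in> borel_measurable (M m)"
    unfolding T_def[abs_def] using mJ by (intro bounded_meas_measurable bounded_meas_sum finite_I bounded_meas_mult) auto
  from integrable_scaleR_dominated[OF int_T this bounded_meas_measurable[OF bounded_meas_kern[OF mJ]] bound]
  show ?thesis using w_pos by simp
qed

lemma SBF_solution_eq_wcomb:
  fixes Y :: "nat \<Rightarrow> 'h::{banach,second_countable_topology}"
  assumes sys: "SBF_system d L D h K n \<xi> Y f"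
  shows "\<exists>\<beta>. coef_system Y \<beta> \<and> (\<forall>j\<in>J. \<forall>x\<in>D j. f j x = wcomb \<beta> j x)"
proof -
  define \<gamma> where "\<gamma> i m = integral\<^sup>L (M m) (\<lambda>t. kern m i t *\<^sub>R f m t)" for i m
  define \<beta> where "\<beta> i j = Yc Y i - (\<Sum>m\<in>J-{j}. \<gamma> i m)" for i j
  have f_eq: "f j x = wcomb \<beta> j x" if j: "j \<in> J" and x: "x \<in> D j" for j x
  proof -
    have "(\<Sum>m\<in>J-{j}. LINT t:D m|Leb (L m). (pjk d L D h K n \<xi> j m x t / pj d L D h K n \<xi> j x) *\<^sub>R f m t)
        = (\<Sum>m\<in>J-{j}. \<Sum>i\<in>I. w j i x *\<^sub>R \<gamma> i m)"
      unfolding \<gamma>_def using integrable_kern_SBF_solution[OF sys j]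
      by (intro sum.cong refl SBF_term_eq) auto
    moreover have "f j x = mj d L D h K n \<xi> Y j x - f0 d D n \<xi> Y -
        (\<Sum>m\<in>J-{j}. LINT t:D m|Leb (L m). (pjk d L D h K n \<xi> j m x t / pj d L D h K n \<xi> j x) *\<^sub>R f m t)"
      using sys j x unfolding SBF_system_def by blast
    ultimately show ?thesis
      using SBF_rhs_wcomb[OF j x, of Y \<gamma>] unfolding \<beta>_def by simp
  qed
  have "\<gamma> i m = smooth i m \<beta>" if "i \<in> I" "m \<in> J" for i m
  proof -
    have "\<gamma> i m = integral\<^sup>L (M m) (\<lambda>t. kern m i t *\<^sub>R wcomb \<beta> m t)"
      unfolding \<gamma>_def using that f_eq by (intro integral_cong_D) auto
    then show ?thesis using integral_kern_wcomb that by simp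
  qed
  then have "coef_system Y \<beta>"
    unfolding coef_system_def \<beta>_def by (auto intro!: sum.cong)
  then show ?thesis using f_eq by blast
qed

lemma
  fixes \<beta> :: "nat \<Rightarrow> nat \<Rightarrow> 'h::{banach,second_countable_topology}"
  assumes j: "j \<in> J"
  shows set_integrable_pj_wcomb: "set_integrable (Leb (L j)) (D j) (\<lambda>x. pj d L D h K n \<xi> j x *\<^sub>R wcomb \<beta> j x)"
    and integral_pj_wcomb:
      "(LINT x:D j|Leb (L j). pj d L D h K n \<xi> j x *\<^sub>R wcomb \<beta> j x) = (1 / N) *\<^sub>R (\<Sum>i\<in>I. \<beta> i j)"
proof -
  have eq: "pj d L D h K n \<xi> j x *\<^sub>R wcomb \<beta> j x = (\<Sum>i\<in>I. (ksum j x / N * w j i x) *\<^sub>R \<beta> i j)" for x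
    unfolding pj_eq wcomb_def by (simp add: scaleR_sum_right)
  have bounded: "bounded_meas j (\<lambda>x. ksum j x / N * w j i x)" if "i \<in> I" for i
    using j that by (auto intro!: bounded_meas_mult simp: divide_inverse)
  show "set_integrable (Leb (L j)) (D j) (\<lambda>x. pj d L D h K n \<xi> j x *\<^sub>R wcomb \<beta> j x)"
    unfolding integrable_M[OF j, symmetric] eq by (intro integral_sum_scaleR_bounded_meas(1) finite_I bounded)
  show "(LINT x:D j|Leb (L j). pj d L D h K n \<xi> j x *\<^sub>R wcomb \<beta> j x) = (1 / N) *\<^sub>R (\<Sum>i\<in>I. \<beta> i j)"
  proof -
    have "(LINT x:D j|Leb (L j). pj d L D h K n \<xi> j x *\<^sub>R wcomb \<beta> j x)
        = (\<Sum>i\<in>I. integral\<^sup>L (M j) (\<lambda>x. ksum j x / N * w j i x) *\<^sub>R \<beta> i j)"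
      unfolding integral_M[OF j, symmetric] eq by (rule integral_sum_scaleR_bounded_meas(2)[OF finite_I bounded])
    also have "\<dots> = (\<Sum>i\<in>I. (1 / N) *\<^sub>R \<beta> i j)"
      by (rule sum.cong[OF refl], subst integral_ksum_w[OF j], assumption, rule refl)
    finally show ?thesis by (simp add: scaleR_sum_right)
  qed
qed

lemma nn_integral_pj_wcomb_finite:
  fixes \<beta> :: "nat \<Rightarrow> nat \<Rightarrow> 'h::{banach,second_countable_topology}"
  assumes j: "j \<in> J"
  shows "(\<integral>\<^sup>+x\<in>D j. ennreal ((norm (wcomb \<beta> j x))\<^sup>2 * pj d L D h K n \<xi> j x) \<partial>Leb (L j)) < \<infinity>"
proof -
  obtain B where B: "\<forall>x\<in>D j. \<bar>ksum j x\<bar> \<le> B"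
    using bounded_meas_ksum[OF j] space_M[OF j] unfolding bounded_meas_def by auto
  define c where "c = (\<Sum>i\<in>I. norm (\<beta> i j))"
  have "(norm (wcomb \<beta> j x))\<^sup>2 * pj d L D h K n \<xi> j x \<le> c\<^sup>2 * (B / N)" if x: "x \<in> D j" for x
  proof (intro mult_mono power_mono)
    have "norm (wcomb \<beta> j x) \<le> (\<Sum>i\<in>I. norm (w j i x *\<^sub>R \<beta> i j))"
      unfolding wcomb_def by (rule norm_sum)
    also have "\<dots> \<le> c"
      unfolding c_def using w_nonneg[OF j] w_le_1[OF j]
      by (intro sum_mono) (auto intro!: mult_left_le_one_le)
    finally show "norm (wcomb \<beta> j x) \<le> c" .
    show "pj d L D h K n \<xi> j x \<le> B / N"
      using B x N_pos unfolding pj_eq by (auto intro!: divide_right_mono)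
  qed (auto simp: pj_eq ksum_nonneg[OF j] N_pos less_imp_le)
  then have "(\<integral>\<^sup>+x\<in>D j. ennreal ((norm (wcomb \<beta> j x))\<^sup>2 * pj d L D h K n \<xi> j x) \<partial>Leb (L j))
      \<le> (\<integral>\<^sup>+x. ennreal (c\<^sup>2 * (B / N)) * indicator (D j) x \<partial>Leb (L j))"
    by (intro nn_integral_mono) (auto simp: indicator_def intro: ennreal_leI)
  also have "\<dots> = ennreal (c\<^sup>2 * (B / N)) * emeasure (Leb (L j)) (D j)"
    using D_sets[OF j] by (rule nn_integral_cmult_indicator)
  also have "\<dots> < \<infinity>" using D_finite[OF j] by (simp add: ennreal_mult_less_top)
  finally show ?thesis .
qed

lemma SBF_constraints_wcomb:
  fixes \<beta> :: "nat \<Rightarrow> nat \<Rightarrow> 'h::{banach,second_countable_topology}"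
  assumes centred: "\<forall>j\<in>J. (\<Sum>i\<in>I. \<beta> i j) = 0"
  shows "SBF_constraints d L D h K n \<xi> (wcomb \<beta>)"
  unfolding SBF_constraints_def
proof (intro ballI conjI)
  fix j assume j: "j \<in> J"
  show "set_integrable (Leb (L j)) (D j) (\<lambda>x. pj d L D h K n \<xi> j x *\<^sub>R wcomb \<beta> j x)"
    by (rule set_integrable_pj_wcomb[OF j])
  show "(LINT x:D j|Leb (L j). pj d L D h K n \<xi> j x *\<^sub>R wcomb \<beta> j x) = 0"
    using centred j by (simp add: integral_pj_wcomb[OF j])
  show "(\<integral>\<^sup>+x\<in>D j. ennreal ((norm (wcomb \<beta> j x))\<^sup>2 * pj d L D h K n \<xi> j x) \<partial>Leb (L j)) < \<infinity>"
    by (rule nn_integral_pj_wcomb_finite[OF j])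
qed

lemma SBF_constraints_imp_centred:
  fixes \<beta> :: "nat \<Rightarrow> nat \<Rightarrow> 'h::{banach,second_countable_topology}"
  assumes cons: "SBF_constraints d L D h K n \<xi> f" and f_eq: "\<forall>j\<in>J. \<forall>x\<in>D j. f j x = wcomb \<beta> j x"
    and j: "j \<in> J"
  shows "(\<Sum>i\<in>I. \<beta> i j) = 0"
proof -
  have "0 = (LINT x:D j|Leb (L j). pj d L D h K n \<xi> j x *\<^sub>R f j x)"
    using cons j unfolding SBF_constraints_def by auto
  also have "\<dots> = (LINT x:D j|Leb (L j). pj d L D h K n \<xi> j x *\<^sub>R wcomb \<beta> j x)"
    unfolding integral_M[OF j, symmetric] using f_eq j by (intro integral_cong_D) auto
  finally show ?thesis unfolding integral_pj_wcomb[OF j] using N_pos by simp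
qed

section \<open>Existence\<close>

text \<open>For s = (i, j) let g s x = w j i (x j). Then gram s t is the inner product of g s and g t
  in L2 of the density pD, and gram_rhs Y s that of g s with the kernel regression of the centred
  responses.\<close>

definition "gram s t = (\<Sum>r\<in>I. if snd s = snd t then Q (snd s) r (fst s) (fst t)
    else C (snd s) r (fst s) * C (snd t) r (fst t)) / N"

definition "gram_rhs Y s = inverse N *\<^sub>R (\<Sum>r\<in>I. C (snd s) r (fst s) *\<^sub>R Yc Y r)"

definition "Csum r v = (\<Sum>s\<in>I \<times> J. v s * C (snd s) r (fst s))"

definition "kvar r j u = (\<Sum>i\<in>I. \<Sum>l\<in>I. u i * u l * (Q j r i l - C j r i * C j r l))"

lemma gram_sym: "gram s t = gram t s"
  unfolding gram_def by (intro arg_cong[where f="\<lambda>x. x / N"] sum.cong refl) (auto simp: mult.commute Q_sym)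

text \<open>kvar r j u is the variance of the sum of the u i * w j i under the probability density kern j r.\<close>

lemma kvar_nonneg: assumes j: "j \<in> J" and r: "r \<in> I" shows "kvar r j u \<ge> 0"
proof -
  define G where "G x = (\<Sum>i\<in>I. u i * w j i x)" for x
  define a where "a = (\<Sum>i\<in>I. u i * C j r i)"
  have bounded: "bounded_meas j G" "bounded_meas j (kern j r)"
    unfolding G_def[abs_def] using j by (auto intro!: bounded_meas_sum finite_I bounded_meas_mult)
  have "(\<integral>x. kern j r x * G x * G x \<partial>M j) = (\<integral>x. (\<Sum>i\<in>I. \<Sum>l\<in>I. u i * u l * (kern j r x * w j i x * w j l x)) \<partial>M j)"
    unfolding G_def by (simp add: sum_distrib_left sum_distrib_right mult_ac)
  also have "\<dots> = (\<Sum>i\<in>I. \<Sum>l\<in>I. u i * u l * Q j r i l)"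
    unfolding Q_def using j
    by (subst integral_sum_bounded_meas, (auto intro!: finite_I bounded_meas_mult bounded_meas_sum)[2],
        intro sum.cong refl, subst integral_sum_bounded_meas, (auto intro!: finite_I bounded_meas_mult)[2]) simp
  finally have kGG: "(\<integral>x. kern j r x * G x * G x \<partial>M j) = (\<Sum>i\<in>I. \<Sum>l\<in>I. u i * u l * Q j r i l)" .
  have "(\<integral>x. kern j r x * G x \<partial>M j) = (\<integral>x. (\<Sum>i\<in>I. u i * (kern j r x * w j i x)) \<partial>M j)"
    unfolding G_def by (simp add: sum_distrib_left mult_ac)
  also have "\<dots> = a"
    unfolding a_def C_def using j by (subst integral_sum_bounded_meas) (auto intro!: finite_I bounded_meas_mult)
  finally have kG: "(\<integral>x. kern j r x * G x \<partial>M j) = a" .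
  have "0 \<le> (\<integral>x. kern j r x * (G x - a)\<^sup>2 \<partial>M j)"
    using kern_nonneg[OF j] by (intro integral_nonneg_AE AE_I2) simp
  also have "\<dots> = (\<integral>x. kern j r x * G x * G x - 2 * a * (kern j r x * G x) + a * a * kern j r x \<partial>M j)"
    by (simp add: power2_eq_square algebra_simps)
  also have "\<dots> = (\<integral>x. kern j r x * G x * G x \<partial>M j) - 2 * a * (\<integral>x. kern j r x * G x \<partial>M j)
      + a * a * integral\<^sup>L (M j) (kern j r)"
    using bounded by (simp add: bounded_meas_integrable bounded_meas_mult)
  also have "\<dots> = kvar r j u"
    unfolding kGG kG integral_kern[OF j r] kvar_def a_def
    by (simp add: algebra_simps sum_subtractf sum_distrib_left sum_distrib_right)
  finally show ?thesis .
qed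

lemma sum_I_times_J: "(\<Sum>s\<in>I \<times> J. F s) = (\<Sum>j\<in>J. \<Sum>i\<in>I. F (i, j))"
proof -
  have "(\<Sum>s\<in>I \<times> J. F s) = (\<Sum>i\<in>I. \<Sum>j\<in>J. F (i, j))"
    by (simp add: sum.cartesian_product case_prod_beta')
  then show ?thesis by (simp add: sum.swap[of _ I])
qed

lemma quad_form_gram_component:
  "(\<Sum>s\<in>I \<times> J. \<Sum>t\<in>I \<times> J. v s * (if snd s = snd t then Q (snd s) r (fst s) (fst t)
      else C (snd s) r (fst s) * C (snd t) r (fst t)) * v t)
    = (\<Sum>j\<in>J. kvar r j (\<lambda>i. v (i, j))) + (Csum r v)\<^sup>2"
proof -
  define R where "R j i l = Q j r i l - C j r i * C j r l" for j i l
  have split: "(if snd s = snd t then Q (snd s) r (fst s) (fst t) else C (snd s) r (fst s) * C (snd t) r (fst t))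
      = (if snd s = snd t then R (snd s) (fst s) (fst t) else 0) + C (snd s) r (fst s) * C (snd t) r (fst t)" for s t
    unfolding R_def by simp
  have diagonal: "(\<Sum>t\<in>I \<times> J. v s * (if snd s = snd t then R (snd s) (fst s) (fst t) else 0) * v t)
      = (\<Sum>l\<in>I. v s * R (snd s) (fst s) l * v (l, snd s))" if "s \<in> I \<times> J" for s
  proof -
    have "(\<Sum>t\<in>I \<times> J. v s * (if snd s = snd t then R (snd s) (fst s) (fst t) else 0) * v t)
        = (\<Sum>j\<in>J. if j = snd s then (\<Sum>l\<in>I. v s * R (snd s) (fst s) l * v (l, snd s)) else 0)"
      unfolding sum_I_times_J by (intro sum.cong refl) auto
    then show ?thesis using that by (auto simp: sum.delta')
  qed
  have "(\<Sum>s\<in>I \<times> J. \<Sum>t\<in>I \<times> J. v s * (if snd s = snd t then Q (snd s) r (fst s) (fst t)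
        else C (snd s) r (fst s) * C (snd t) r (fst t)) * v t)
      = (\<Sum>s\<in>I \<times> J. \<Sum>t\<in>I \<times> J. v s * (if snd s = snd t then R (snd s) (fst s) (fst t) else 0) * v t
          + (v s * C (snd s) r (fst s)) * (v t * C (snd t) r (fst t)))"
    unfolding split by (intro sum.cong refl) (simp add: algebra_simps)
  also have "\<dots> = (\<Sum>s\<in>I \<times> J. \<Sum>t\<in>I \<times> J. v s * (if snd s = snd t then R (snd s) (fst s) (fst t) else 0) * v t)
      + (\<Sum>s\<in>I \<times> J. \<Sum>t\<in>I \<times> J. (v s * C (snd s) r (fst s)) * (v t * C (snd t) r (fst t)))"
    by (simp only: sum.distrib)
  also have "(\<Sum>s\<in>I \<times> J. \<Sum>t\<in>I \<times> J. v s * (if snd s = snd t then R (snd s) (fst s) (fst t) else 0) * v t)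
      = (\<Sum>s\<in>I \<times> J. \<Sum>l\<in>I. v s * R (snd s) (fst s) l * v (l, snd s))"
    by (intro sum.cong refl diagonal)
  also have "\<dots> = (\<Sum>j\<in>J. kvar r j (\<lambda>i. v (i, j)))"
    unfolding sum_I_times_J kvar_def R_def by (simp add: mult_ac)
  also have "(\<Sum>s\<in>I \<times> J. \<Sum>t\<in>I \<times> J. (v s * C (snd s) r (fst s)) * (v t * C (snd t) r (fst t))) = (Csum r v)\<^sup>2"
    unfolding Csum_def power2_eq_square sum_product ..
  finally show ?thesis .
qed

lemma quad_form_gram: "quad_form gram (I \<times> J) v = (\<Sum>r\<in>I. (\<Sum>j\<in>J. kvar r j (\<lambda>i. v (i, j))) + (Csum r v)\<^sup>2) / N"
  unfolding quad_form_def gram_def quad_form_gram_component[symmetric]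
  by (simp add: sum_distrib_left sum_distrib_right sum_divide_distrib mult_ac sum.swap[of _ I])

lemma quad_form_gram_nonneg: "quad_form gram (I \<times> J) v \<ge> 0"
  unfolding quad_form_gram using N_pos kvar_nonneg
  by (intro divide_nonneg_pos sum_nonneg add_nonneg_nonneg) auto

lemma quad_form_gram_eq_0: assumes "quad_form gram (I \<times> J) v = 0" and r: "r \<in> I" shows "Csum r v = 0"
proof -
  have nonneg: "(\<Sum>j\<in>J. kvar r j (\<lambda>i. v (i, j))) \<ge> 0" if "r \<in> I" for r
    using kvar_nonneg that by (intro sum_nonneg) auto
  have "(\<Sum>r\<in>I. (\<Sum>j\<in>J. kvar r j (\<lambda>i. v (i, j))) + (Csum r v)\<^sup>2) = 0"
    using assms(1) N_pos unfolding quad_form_gram by simp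
  then have "(\<Sum>j\<in>J. kvar r j (\<lambda>i. v (i, j))) + (Csum r v)\<^sup>2 = 0"
    using nonneg finite_I r by (subst (asm) sum_nonneg_eq_0_iff) (auto intro!: add_nonneg_nonneg)
  then show ?thesis using nonneg[OF r] by (simp add: add_nonneg_eq_0_iff)
qed

lemma sum_scaleR_gram_rhs: "(\<Sum>s\<in>I \<times> J. v s *\<^sub>R gram_rhs Y s) = inverse N *\<^sub>R (\<Sum>r\<in>I. Csum r v *\<^sub>R Yc Y r)"
proof -
  have "(\<Sum>s\<in>I \<times> J. v s *\<^sub>R gram_rhs Y s) = (\<Sum>s\<in>I \<times> J. \<Sum>r\<in>I. (inverse N * (v s * C (snd s) r (fst s))) *\<^sub>R Yc Y r)"
    unfolding gram_rhs_def by (simp add: scaleR_sum_right mult_ac)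
  also have "\<dots> = (\<Sum>r\<in>I. \<Sum>s\<in>I \<times> J. (inverse N * (v s * C (snd s) r (fst s))) *\<^sub>R Yc Y r)"
    by (rule sum.swap)
  also have "\<dots> = inverse N *\<^sub>R (\<Sum>r\<in>I. Csum r v *\<^sub>R Yc Y r)"
    unfolding Csum_def by (simp add: scaleR_sum_right scaleR_sum_left)
  finally show ?thesis .
qed

lemma gram_system_solvable: "\<exists>u. \<forall>t\<in>I \<times> J. (\<Sum>s\<in>I \<times> J. gram s t *\<^sub>R u s) = gram_rhs Y t"
proof (rule psd_system_solvable)
  show "finite (I \<times> J)" using finite_I by simp
  show "gram s t = gram t s" for s t by (rule gram_sym)
  show "quad_form gram (I \<times> J) v \<ge> 0" for v by (rule quad_form_gram_nonneg)
  show "(\<Sum>s\<in>I \<times> J. v s *\<^sub>R gram_rhs Y s) = 0" if "quad_form gram (I \<times> J) v = 0" for v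
    unfolding sum_scaleR_gram_rhs using quad_form_gram_eq_0[OF that] by simp
qed

lemma gram_solution_smooth:
  assumes u: "\<forall>t\<in>I \<times> J. (\<Sum>s\<in>I \<times> J. gram s t *\<^sub>R u s) = gram_rhs Y t"
    and i0: "i0 \<in> I" and j0: "j0 \<in> J"
  shows "smooth i0 j0 (\<lambda>i j. u (i, j))
    = (\<Sum>r\<in>I. C j0 r i0 *\<^sub>R (Yc Y r - (\<Sum>m\<in>J-{j0}. smooth r m (\<lambda>i j. u (i, j)))))"
proof -
  let ?u = "\<lambda>i j. u (i, j)"
  have same: "(\<Sum>i\<in>I. gram (i, j0) (i0, j0) *\<^sub>R u (i, j0)) = inverse N *\<^sub>R smooth i0 j0 ?u"
  proof -
    have "(\<Sum>i\<in>I. gram (i, j0) (i0, j0) *\<^sub>R u (i, j0)) = (\<Sum>i\<in>I. (inverse N * C j0 i0 i) *\<^sub>R u (i, j0))"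
      using sum_Q[OF j0 _ i0] by (intro sum.cong refl) (simp add: gram_def C_sym[of j0 i0] divide_inverse mult_ac)
    then show ?thesis unfolding smooth_def by (simp add: scaleR_sum_right)
  qed
  have other: "(\<Sum>j\<in>J-{j0}. \<Sum>i\<in>I. gram (i, j) (i0, j0) *\<^sub>R u (i, j)) =
      inverse N *\<^sub>R (\<Sum>r\<in>I. C j0 r i0 *\<^sub>R (\<Sum>m\<in>J-{j0}. smooth r m ?u))"
  proof -
    have "(\<Sum>j\<in>J-{j0}. \<Sum>i\<in>I. gram (i, j) (i0, j0) *\<^sub>R u (i, j)) =
        (\<Sum>j\<in>J-{j0}. \<Sum>i\<in>I. \<Sum>r\<in>I. (inverse N * (C j0 r i0 * C j r i)) *\<^sub>R u (i, j))"
      by (intro sum.cong refl) (auto simp: gram_def scaleR_sum_left divide_inverse mult_ac sum_distrib_left)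
    also have "\<dots> = (\<Sum>j\<in>J-{j0}. \<Sum>r\<in>I. \<Sum>i\<in>I. (inverse N * (C j0 r i0 * C j r i)) *\<^sub>R u (i, j))"
      by (rule sum.cong[OF refl], rule sum.swap)
    also have "\<dots> = (\<Sum>r\<in>I. \<Sum>j\<in>J-{j0}. \<Sum>i\<in>I. (inverse N * (C j0 r i0 * C j r i)) *\<^sub>R u (i, j))"
      by (rule sum.swap)
    also have "\<dots> = inverse N *\<^sub>R (\<Sum>r\<in>I. C j0 r i0 *\<^sub>R (\<Sum>m\<in>J-{j0}. smooth r m ?u))"
      unfolding smooth_def by (simp add: scaleR_sum_right)
    finally show ?thesis .
  qed
  have "gram_rhs Y (i0, j0) = (\<Sum>s\<in>I \<times> J. gram s (i0, j0) *\<^sub>R u s)" using u i0 j0 by auto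
  also have "\<dots> = (\<Sum>i\<in>I. gram (i, j0) (i0, j0) *\<^sub>R u (i, j0)) + (\<Sum>j\<in>J-{j0}. \<Sum>i\<in>I. gram (i, j) (i0, j0) *\<^sub>R u (i, j))"
    unfolding sum_I_times_J using j0 by (simp add: sum.remove)
  finally have "smooth i0 j0 ?u + (\<Sum>r\<in>I. C j0 r i0 *\<^sub>R (\<Sum>m\<in>J-{j0}. smooth r m ?u))
      = (\<Sum>r\<in>I. C j0 r i0 *\<^sub>R Yc Y r)"
    unfolding same other gram_rhs_def using N_pos by (simp add: scaleR_add_right[symmetric])
  then show ?thesis by (simp add: scaleR_diff_right sum_subtractf algebra_simps)
qed

text \<open>The Gram system is the weak form of the coefficient system, tested against the
  weights; reinserting a weak solution into the right-hand side yields a strong one.\<close>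

lemma coef_system_of_gram_solution:
  assumes u: "\<forall>t\<in>I \<times> J. (\<Sum>s\<in>I \<times> J. gram s t *\<^sub>R u s) = gram_rhs Y t"
  shows "coef_system Y (\<lambda>r j. Yc Y r - (\<Sum>m\<in>J-{j}. smooth r m (\<lambda>i j. u (i, j))))"
proof -
  define \<beta> where "\<beta> r j = Yc Y r - (\<Sum>m\<in>J-{j}. smooth r m (\<lambda>i j. u (i, j)))" for r j
  have "smooth i j (\<lambda>i j. u (i, j)) = smooth i j \<beta>" if "i \<in> I" "j \<in> J" for i j
  proof -
    have "smooth i j (\<lambda>i j. u (i, j)) = (\<Sum>r\<in>I. C j r i *\<^sub>R \<beta> r j)"
      using gram_solution_smooth[OF u that] unfolding \<beta>_def .
    then show ?thesis unfolding smooth_def by (simp add: C_sym)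
  qed
  then show ?thesis
    unfolding coef_system_def \<beta>_def[symmetric] by (auto simp: \<beta>_def intro!: sum.cong)
qed

text \<open>Summing the coefficient system over the data points shows that the column sums of any
  solution add up to zero, so subtracting their means gives a centred solution.\<close>

lemma coef_system_centre:
  assumes sys: "coef_system Y \<beta>"
  shows "coef_system Y (\<lambda>i j. \<beta> i j - inverse N *\<^sub>R (\<Sum>l\<in>I. \<beta> l j))"
    and "\<forall>j\<in>J. (\<Sum>i\<in>I. \<beta> i j - inverse N *\<^sub>R (\<Sum>l\<in>I. \<beta> l j)) = 0"
proof -
  define s where "s j = (\<Sum>l\<in>I. \<beta> l j)" for j
  have s_rel: "s j = - (\<Sum>m\<in>J-{j}. s m)" if j: "j \<in> J" for j
  proof -
    have "s j = (\<Sum>i\<in>I. Yc Y i) - (\<Sum>i\<in>I. \<Sum>m\<in>J-{j}. smooth i m \<beta>)"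
      unfolding s_def using sys j unfolding coef_system_def by (simp add: sum_subtractf)
    also have "(\<Sum>i\<in>I. \<Sum>m\<in>J-{j}. smooth i m \<beta>) = (\<Sum>m\<in>J-{j}. s m)"
      unfolding s_def by (subst sum.swap) (auto intro!: sum.cong sum_smooth)
    finally show ?thesis using sum_Yc by simp
  qed
  show "coef_system Y (\<lambda>i j. \<beta> i j - inverse N *\<^sub>R (\<Sum>l\<in>I. \<beta> l j))"
    unfolding coef_system_def s_def[symmetric]
  proof (intro ballI)
    fix i j assume i: "i \<in> I" and j: "j \<in> J"
    have "(\<Sum>m\<in>J-{j}. smooth i m (\<lambda>i j. \<beta> i j - inverse N *\<^sub>R s j))
        = (\<Sum>m\<in>J-{j}. smooth i m \<beta> - inverse N *\<^sub>R s m)"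
      using i by (intro sum.cong refl smooth_shift) auto
    also have "\<dots> = (\<Sum>m\<in>J-{j}. smooth i m \<beta>) + inverse N *\<^sub>R s j"
      using s_rel[OF j] by (simp add: sum_subtractf scaleR_sum_right[symmetric])
    finally show "\<beta> i j - inverse N *\<^sub>R s j = Yc Y i - (\<Sum>m\<in>J-{j}. smooth i m (\<lambda>i j. \<beta> i j - inverse N *\<^sub>R s j))"
      using sys i j unfolding coef_system_def by (simp add: algebra_simps)
  qed
  show "\<forall>j\<in>J. (\<Sum>i\<in>I. \<beta> i j - inverse N *\<^sub>R (\<Sum>l\<in>I. \<beta> l j)) = 0"
    using N_pos by (simp add: sum_subtractf sum_constant_scaleR N_def)
qed

lemma coef_system_solvable: "\<exists>\<beta>. coef_system Y \<beta> \<and> (\<forall>j\<in>J. (\<Sum>i\<in>I. \<beta> i j) = 0)"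
proof -
  obtain u where "\<forall>t\<in>I \<times> J. (\<Sum>s\<in>I \<times> J. gram s t *\<^sub>R u s) = gram_rhs Y t"
    using gram_system_solvable by blast
  from coef_system_centre[OF coef_system_of_gram_solution[OF this]] show ?thesis by blast
qed

section \<open>Uniqueness\<close>

lemma
  assumes \<rho>: "\<And>q. q \<in> J \<Longrightarrow> bounded_meas q (\<rho> q)" "\<And>q. q \<in> J \<Longrightarrow> integral\<^sup>L (M q) (\<rho> q) = 1"
    and j: "j \<in> J" and g: "bounded_meas j g"
  shows integrable_PiM_coordinate: "integrable (Pi\<^sub>M J M) (\<lambda>x. (\<Prod>q\<in>J. \<rho> q (x q)) * g (x j))"
    and integral_PiM_coordinate: "(\<integral>x. (\<Prod>q\<in>J. \<rho> q (x q)) * g (x j) \<partial>Pi\<^sub>M J M) = (\<integral>y. \<rho> j y * g y \<partial>M j)"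
proof -
  define f where "f q y = \<rho> q y * (if q = j then g y else 1)" for q y
  have eq: "(\<Prod>q\<in>J. \<rho> q (x q)) * g (x j) = (\<Prod>q\<in>J. f q (x q))" for x
    unfolding f_def prod.distrib using j by (simp add: prod.If_cases Int_absorb1)
  have int: "integrable (M q) (f q)" if "q \<in> J" for q
    unfolding f_def using that g \<rho>(1)[OF that] by (cases "q = j") (auto intro!: bounded_meas_integrable bounded_meas_mult)
  show "integrable (Pi\<^sub>M J M) (\<lambda>x. (\<Prod>q\<in>J. \<rho> q (x q)) * g (x j))"
    unfolding eq using int by (intro product_sigma_finite.product_integrable_prod[OF product_sigma_finite_M]) auto
  show "(\<integral>x. (\<Prod>q\<in>J. \<rho> q (x q)) * g (x j) \<partial>Pi\<^sub>M J M) = (\<integral>y. \<rho> j y * g y \<partial>M j)"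
    unfolding eq using j int \<rho>(2)
    by (subst product_sigma_finite.product_integral_prod_normalized[OF product_sigma_finite_M, of J "{j}"])
      (auto simp: f_def[abs_def])
qed

lemma
  assumes \<rho>: "\<And>q. q \<in> J \<Longrightarrow> bounded_meas q (\<rho> q)" "\<And>q. q \<in> J \<Longrightarrow> integral\<^sup>L (M q) (\<rho> q) = 1"
    and j: "j \<in> J" and m: "m \<in> J" and jm: "j \<noteq> m" and g: "bounded_meas j g" and g': "bounded_meas m g'"
  shows integrable_PiM_two_coordinates:
      "integrable (Pi\<^sub>M J M) (\<lambda>x. (\<Prod>q\<in>J. \<rho> q (x q)) * (g (x j) * g' (x m)))"
    and integral_PiM_two_coordinates: "(\<integral>x. (\<Prod>q\<in>J. \<rho> q (x q)) * (g (x j) * g' (x m)) \<partial>Pi\<^sub>M J M)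
      = (\<integral>y. \<rho> j y * g y \<partial>M j) * (\<integral>y. \<rho> m y * g' y \<partial>M m)"
proof -
  define f where "f q y = \<rho> q y * (if q = j then g y else if q = m then g' y else 1)" for q y
  have eq: "(\<Prod>q\<in>J. \<rho> q (x q)) * (g (x j) * g' (x m)) = (\<Prod>q\<in>J. f q (x q))" for x
  proof -
    have "(\<Prod>q\<in>J. if q = j then g (x q) else if q = m then g' (x q) else 1) = g (x j) * g' (x m)"
      using j m jm by (simp add: prod.If_cases Int_absorb1 Diff_Int_distrib2 insert_Diff_if)
    then show ?thesis unfolding f_def prod.distrib by simp
  qed
  have int: "integrable (M q) (f q)" if "q \<in> J" for q
    unfolding f_def using that g g' \<rho>(1)[OF that]
    by (cases "q = j"; cases "q = m") (auto intro!: bounded_meas_integrable bounded_meas_mult)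
  show "integrable (Pi\<^sub>M J M) (\<lambda>x. (\<Prod>q\<in>J. \<rho> q (x q)) * (g (x j) * g' (x m)))"
    unfolding eq using int by (intro product_sigma_finite.product_integrable_prod[OF product_sigma_finite_M]) auto
  show "(\<integral>x. (\<Prod>q\<in>J. \<rho> q (x q)) * (g (x j) * g' (x m)) \<partial>Pi\<^sub>M J M)
      = (\<integral>y. \<rho> j y * g y \<partial>M j) * (\<integral>y. \<rho> m y * g' y \<partial>M m)"
    unfolding eq using j m jm int \<rho>(2)
    by (subst product_sigma_finite.product_integral_prod_normalized[OF product_sigma_finite_M, of J "{j, m}"])
      (auto simp: f_def[abs_def])
qed

lemma inner_wcomb: "inner (wcomb \<delta> j y) (wcomb \<delta> m z)
    = (\<Sum>i\<in>I. \<Sum>l\<in>I. (w j i y * w m l z) * inner (\<delta> i j) (\<delta> l m))"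
  unfolding wcomb_def inner_sum_left by (simp add: inner_sum_right mult_ac)

lemma bounded_meas_norm_wcomb:
  fixes \<delta> :: "nat \<Rightarrow> nat \<Rightarrow> 'h::real_inner"
  assumes j: "j \<in> J" and \<rho>: "bounded_meas j \<rho>"
  shows "bounded_meas j (\<lambda>y. \<rho> y * (norm (wcomb \<delta> j y))\<^sup>2)"
  unfolding power2_norm_eq_inner inner_wcomb using j \<rho> by (intro bounded_meas_mult bounded_meas_sum finite_I) auto

definition "wmean \<rho> (\<delta> :: nat \<Rightarrow> nat \<Rightarrow> 'h::real_vector) j = (\<Sum>i\<in>I. (\<integral>y. \<rho> j y * w j i y \<partial>M j) *\<^sub>R \<delta> i j)"

lemma
  fixes \<delta> :: "nat \<Rightarrow> nat \<Rightarrow> 'h::{real_inner,banach,second_countable_topology}"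
  assumes \<rho>: "\<And>q. q \<in> J \<Longrightarrow> bounded_meas q (\<rho> q)" "\<And>q. q \<in> J \<Longrightarrow> integral\<^sup>L (M q) (\<rho> q) = 1"
    and j: "j \<in> J" and m: "m \<in> J - {j}"
  shows integrable_PiM_inner_wcomb:
      "integrable (Pi\<^sub>M J M) (\<lambda>x. (\<Prod>q\<in>J. \<rho> q (x q)) * inner (wcomb \<delta> j (x j)) (wcomb \<delta> m (x m)))"
    and integral_PiM_inner_wcomb:
      "(\<integral>x. (\<Prod>q\<in>J. \<rho> q (x q)) * inner (wcomb \<delta> j (x j)) (wcomb \<delta> m (x m)) \<partial>Pi\<^sub>M J M)
        = inner (wmean \<rho> \<delta> j) (wmean \<rho> \<delta> m)"
proof -
  have jm: "j \<in> J" "m \<in> J" "j \<noteq> m" using j m by auto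
  let ?P = "\<lambda>x. \<Prod>q\<in>J. \<rho> q (x q)"
  have eq: "?P x * inner (wcomb \<delta> j (x j)) (wcomb \<delta> m (x m))
      = (\<Sum>i\<in>I. \<Sum>l\<in>I. inner (\<delta> i j) (\<delta> l m) * (?P x * (w j i (x j) * w m l (x m))))" for x
    unfolding inner_wcomb by (simp add: sum_distrib_left mult_ac)
  have int: "integrable (Pi\<^sub>M J M) (\<lambda>x. inner (\<delta> i j) (\<delta> l m) * (?P x * (w j i (x j) * w m l (x m))))"
    if "i \<in> I" "l \<in> I" for i l
    using that jm by (intro integrable_mult_right integrable_PiM_two_coordinates[OF \<rho>]) auto
  show "integrable (Pi\<^sub>M J M) (\<lambda>x. ?P x * inner (wcomb \<delta> j (x j)) (wcomb \<delta> m (x m)))"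
    unfolding eq using int by (rule integrable_sum_sum)
  have "(\<integral>x. ?P x * inner (wcomb \<delta> j (x j)) (wcomb \<delta> m (x m)) \<partial>Pi\<^sub>M J M)
      = (\<Sum>i\<in>I. \<Sum>l\<in>I. integral\<^sup>L (Pi\<^sub>M J M) (\<lambda>x. inner (\<delta> i j) (\<delta> l m) * (?P x * (w j i (x j) * w m l (x m)))))"
    unfolding eq by (rule integral_sum_sum) (rule int)
  also have "\<dots> = (\<Sum>i\<in>I. \<Sum>l\<in>I. inner (\<delta> i j) (\<delta> l m) *
      integral\<^sup>L (Pi\<^sub>M J M) (\<lambda>x. ?P x * (w j i (x j) * w m l (x m))))"
    by simp
  also have "\<dots> = (\<Sum>i\<in>I. \<Sum>l\<in>I. inner (\<delta> i j) (\<delta> l m) *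
      ((\<integral>y. \<rho> j y * w j i y \<partial>M j) * (\<integral>y. \<rho> m y * w m l y \<partial>M m)))"
    using jm by (intro sum.cong refl arg_cong2[where f="(*)"] integral_PiM_two_coordinates[OF \<rho> jm] bounded_meas_w)
  also have "\<dots> = inner (wmean \<rho> \<delta> j) (wmean \<rho> \<delta> m)"
    unfolding wmean_def inner_sum_left by (simp add: inner_sum_right mult_ac)
  finally show "(\<integral>x. ?P x * inner (wcomb \<delta> j (x j)) (wcomb \<delta> m (x m)) \<partial>Pi\<^sub>M J M)
      = inner (wmean \<rho> \<delta> j) (wmean \<rho> \<delta> m)" .
qed

lemma
  fixes \<delta> :: "nat \<Rightarrow> nat \<Rightarrow> 'h::{real_inner,banach,second_countable_topology}"
  assumes \<rho>: "\<And>q. q \<in> J \<Longrightarrow> bounded_meas q (\<rho> q)" "\<And>q. q \<in> J \<Longrightarrow> integral\<^sup>L (M q) (\<rho> q) = 1"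
    and j: "j \<in> J"
  shows integrable_PiM_norm_wcomb:
      "integrable (Pi\<^sub>M J M) (\<lambda>x. (\<Prod>q\<in>J. \<rho> q (x q)) * (norm (wcomb \<delta> j (x j)))\<^sup>2)"
    and integral_PiM_norm_wcomb:
      "(\<integral>x. (\<Prod>q\<in>J. \<rho> q (x q)) * (norm (wcomb \<delta> j (x j)))\<^sup>2 \<partial>Pi\<^sub>M J M)
        = (\<integral>y. \<rho> j y * (norm (wcomb \<delta> j y))\<^sup>2 \<partial>M j)"
  using integrable_PiM_coordinate[OF \<rho> j] integral_PiM_coordinate[OF \<rho> j]
    bounded_meas_norm_wcomb[OF j bounded_meas_const[of j 1]] by auto

lemma
  fixes \<delta> :: "nat \<Rightarrow> nat \<Rightarrow> 'h::{real_inner,banach,second_countable_topology}"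
  assumes \<rho>: "\<And>q. q \<in> J \<Longrightarrow> bounded_meas q (\<rho> q)" "\<And>q. q \<in> J \<Longrightarrow> integral\<^sup>L (M q) (\<rho> q) = 1"
  shows integrable_PiM_norm_sum_wcomb:
      "integrable (Pi\<^sub>M J M) (\<lambda>x. (\<Prod>q\<in>J. \<rho> q (x q)) * (norm (\<Sum>j\<in>J. wcomb \<delta> j (x j)))\<^sup>2)"
    and integral_PiM_norm_sum_wcomb:
      "(\<integral>x. (\<Prod>q\<in>J. \<rho> q (x q)) * (norm (\<Sum>j\<in>J. wcomb \<delta> j (x j)))\<^sup>2 \<partial>Pi\<^sub>M J M)
        = (\<Sum>j\<in>J. \<integral>y. \<rho> j y * (norm (wcomb \<delta> j y))\<^sup>2 \<partial>M j)
          + (\<Sum>j\<in>J. \<Sum>m\<in>J-{j}. inner (wmean \<rho> \<delta> j) (wmean \<rho> \<delta> m))"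
proof -
  let ?P = "\<lambda>x. \<Prod>q\<in>J. \<rho> q (x q)"
  let ?X = "\<lambda>j m x. ?P x * inner (wcomb \<delta> j (x j)) (wcomb \<delta> m (x m))"
  have eq: "?P x * (norm (\<Sum>j\<in>J. wcomb \<delta> j (x j)))\<^sup>2
      = (\<Sum>j\<in>J. ?P x * (norm (wcomb \<delta> j (x j)))\<^sup>2) + (\<Sum>j\<in>J. \<Sum>m\<in>J-{j}. ?X j m x)" for x
    unfolding power2_norm_sum[OF finite_atLeastAtMost] by (simp add: distrib_left sum_distrib_left)
  have int_diag: "integrable (Pi\<^sub>M J M) (\<lambda>x. \<Sum>j\<in>J. ?P x * (norm (wcomb \<delta> j (x j)))\<^sup>2)"
    by (rule Bochner_Integration.integrable_sum) (rule integrable_PiM_norm_wcomb[OF \<rho>])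
  have int_cross: "integrable (Pi\<^sub>M J M) (\<lambda>x. \<Sum>j\<in>J. \<Sum>m\<in>J-{j}. ?X j m x)"
    by (rule integrable_sum_sum) (rule integrable_PiM_inner_wcomb[OF \<rho>])
  show "integrable (Pi\<^sub>M J M) (\<lambda>x. ?P x * (norm (\<Sum>j\<in>J. wcomb \<delta> j (x j)))\<^sup>2)"
    unfolding eq using int_diag int_cross by (rule Bochner_Integration.integrable_add)
  have "(\<integral>x. ?P x * (norm (\<Sum>j\<in>J. wcomb \<delta> j (x j)))\<^sup>2 \<partial>Pi\<^sub>M J M)
      = (\<integral>x. (\<Sum>j\<in>J. ?P x * (norm (wcomb \<delta> j (x j)))\<^sup>2) \<partial>Pi\<^sub>M J M)
        + (\<integral>x. (\<Sum>j\<in>J. \<Sum>m\<in>J-{j}. ?X j m x) \<partial>Pi\<^sub>M J M)"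
    unfolding eq by (rule Bochner_Integration.integral_add[OF int_diag int_cross])
  also have "(\<integral>x. (\<Sum>j\<in>J. ?P x * (norm (wcomb \<delta> j (x j)))\<^sup>2) \<partial>Pi\<^sub>M J M)
      = (\<Sum>j\<in>J. \<integral>x. ?P x * (norm (wcomb \<delta> j (x j)))\<^sup>2 \<partial>Pi\<^sub>M J M)"
    by (rule Bochner_Integration.integral_sum) (rule integrable_PiM_norm_wcomb[OF \<rho>])
  also have "\<dots> = (\<Sum>j\<in>J. \<integral>y. \<rho> j y * (norm (wcomb \<delta> j y))\<^sup>2 \<partial>M j)"
    by (rule sum.cong[OF refl integral_PiM_norm_wcomb[OF \<rho>]])
  also have "(\<integral>x. (\<Sum>j\<in>J. \<Sum>m\<in>J-{j}. ?X j m x) \<partial>Pi\<^sub>M J M)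
      = (\<Sum>j\<in>J. \<Sum>m\<in>J-{j}. integral\<^sup>L (Pi\<^sub>M J M) (?X j m))"
    by (rule integral_sum_sum) (rule integrable_PiM_inner_wcomb[OF \<rho>])
  also have "\<dots> = (\<Sum>j\<in>J. \<Sum>m\<in>J-{j}. inner (wmean \<rho> \<delta> j) (wmean \<rho> \<delta> m))"
    by (intro sum.cong refl integral_PiM_inner_wcomb[OF \<rho>])
  finally show "(\<integral>x. ?P x * (norm (\<Sum>j\<in>J. wcomb \<delta> j (x j)))\<^sup>2 \<partial>Pi\<^sub>M J M)
      = (\<Sum>j\<in>J. \<integral>y. \<rho> j y * (norm (wcomb \<delta> j y))\<^sup>2 \<partial>M j)
        + (\<Sum>j\<in>J. \<Sum>m\<in>J-{j}. inner (wmean \<rho> \<delta> j) (wmean \<rho> \<delta> m))" .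
qed

lemma coef_system_diff:
  assumes "coef_system Y \<beta>" and "coef_system Y \<beta>'"
  shows "coef_system (\<lambda>_. 0) (\<lambda>i j. \<beta> i j - \<beta>' i j)"
  using assms unfolding coef_system_def smooth_diff
  by (simp add: Yc_def Ymean_def sum_subtractf)

lemma SBF_solutions_difference:
  fixes Y :: "nat \<Rightarrow> 'h::{banach,second_countable_topology}"
  assumes sys: "SBF_system d L D h K n \<xi> Y f" and sys': "SBF_system d L D h K n \<xi> Y f'"
  obtains \<delta> where "coef_system (\<lambda>_. 0) \<delta>" and "\<forall>j\<in>J. \<forall>x\<in>D j. f j x - f' j x = wcomb \<delta> j x"
    and "SBF_constraints d L D h K n \<xi> f \<and> SBF_constraints d L D h K n \<xi> f' \<longrightarrow> (\<forall>j\<in>J. (\<Sum>i\<in>I. \<delta> i j) = 0)"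
proof -
  obtain \<beta> where \<beta>: "coef_system Y \<beta>" and f: "\<forall>j\<in>J. \<forall>x\<in>D j. f j x = wcomb \<beta> j x"
    using SBF_solution_eq_wcomb[OF sys] by blast
  obtain \<beta>' where \<beta>': "coef_system Y \<beta>'" and f': "\<forall>j\<in>J. \<forall>x\<in>D j. f' j x = wcomb \<beta>' j x"
    using SBF_solution_eq_wcomb[OF sys'] by blast
  show ?thesis
  proof
    show "coef_system (\<lambda>_. 0) (\<lambda>i j. \<beta> i j - \<beta>' i j)" by (rule coef_system_diff[OF \<beta> \<beta>'])
    show "\<forall>j\<in>J. \<forall>x\<in>D j. f j x - f' j x = wcomb (\<lambda>i j. \<beta> i j - \<beta>' i j) j x"
      using f f' by (simp add: wcomb_diff)
    show "SBF_constraints d L D h K n \<xi> f \<and> SBF_constraints d L D h K n \<xi> f' \<longrightarrow>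
        (\<forall>j\<in>J. (\<Sum>i\<in>I. \<beta> i j - \<beta>' i j) = 0)"
      using SBF_constraints_imp_centred[OF _ f] SBF_constraints_imp_centred[OF _ f']
      by (simp add: sum_subtractf)
  qed
qed

lemma sum_integral_kern_norm_wcomb:
  fixes \<delta> :: "nat \<Rightarrow> nat \<Rightarrow> 'h::{real_inner,banach,second_countable_topology}"
  assumes j: "j \<in> J"
  shows "(\<Sum>r\<in>I. \<integral>y. kern j r y * (norm (wcomb \<delta> j y))\<^sup>2 \<partial>M j) = (\<Sum>i\<in>I. inner (\<delta> i j) (smooth i j \<delta>))"
proof -
  have int: "integrable (M j) (\<lambda>y. inner (\<delta> i j) (\<delta> l j) * (kern j i y * w j l y))" if "i \<in> I" "l \<in> I" for i l
    using j that by (intro bounded_meas_integrable bounded_meas_mult) auto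
  have "(\<Sum>r\<in>I. \<integral>y. kern j r y * (norm (wcomb \<delta> j y))\<^sup>2 \<partial>M j)
      = (\<integral>y. ksum j y * (norm (wcomb \<delta> j y))\<^sup>2 \<partial>M j)"
    unfolding ksum_def sum_distrib_right using j
    by (intro integral_sum_bounded_meas[symmetric] finite_I bounded_meas_norm_wcomb bounded_meas_kern)
  also have "\<dots> = (\<integral>y. (\<Sum>i\<in>I. \<Sum>l\<in>I. inner (\<delta> i j) (\<delta> l j) * (kern j i y * w j l y)) \<partial>M j)"
    unfolding power2_norm_eq_inner inner_wcomb using j
    by (intro integral_cong_D) (auto simp: sum_distrib_left ksum_mult_w[symmetric] mult_ac)
  also have "\<dots> = (\<Sum>i\<in>I. \<Sum>l\<in>I. integral\<^sup>L (M j) (\<lambda>y. inner (\<delta> i j) (\<delta> l j) * (kern j i y * w j l y)))"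
    by (rule integral_sum_sum) (rule int)
  also have "\<dots> = (\<Sum>i\<in>I. \<Sum>l\<in>I. inner (\<delta> i j) (\<delta> l j) * C j i l)"
    unfolding C_def by simp
  also have "\<dots> = (\<Sum>i\<in>I. inner (\<delta> i j) (smooth i j \<delta>))"
    unfolding smooth_def inner_sum_right by (simp add: mult_ac)
  finally show ?thesis .
qed

lemma wmean_kern: "wmean (\<lambda>q. kern q r) \<delta> j = smooth r j \<delta>"
  unfolding wmean_def smooth_def C_def ..

lemma homogeneous_cross_terms:
  fixes \<delta> :: "nat \<Rightarrow> nat \<Rightarrow> 'h::real_inner"
  assumes hom: "coef_system (\<lambda>_. 0) \<delta>" and r: "r \<in> I"
  shows "(\<Sum>j\<in>J. \<Sum>m\<in>J-{j}. inner (smooth r j \<delta>) (smooth r m \<delta>)) = - (\<Sum>j\<in>J. inner (\<delta> r j) (smooth r j \<delta>))"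
proof -
  have "(\<Sum>m\<in>J-{j}. smooth r m \<delta>) = - \<delta> r j" if "j \<in> J" for j
    using hom r that unfolding coef_system_def Yc_def Ymean_def by simp
  then show ?thesis by (simp add: inner_sum_right[symmetric] sum_negf inner_commute)
qed

text \<open>For a solution of the homogeneous coefficient system, the expansion of the squared norm
  against each product kernel cancels exactly after summing over the data points.\<close>

lemma integral_pD_norm_sum_wcomb_homogeneous:
  fixes \<delta> :: "nat \<Rightarrow> nat \<Rightarrow> 'h::{real_inner,banach,second_countable_topology}"
  assumes hom: "coef_system (\<lambda>_. 0) \<delta>"
  shows "integrable (Pi\<^sub>M J M) (\<lambda>x. pD d L D h K n \<xi> x * (norm (\<Sum>j\<in>J. wcomb \<delta> j (x j)))\<^sup>2)"
    and "(\<integral>x. pD d L D h K n \<xi> x * (norm (\<Sum>j\<in>J. wcomb \<delta> j (x j)))\<^sup>2 \<partial>Pi\<^sub>M J M) = 0"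
proof -
  let ?n = "\<lambda>x. (norm (\<Sum>j\<in>J. wcomb \<delta> j (x j)))\<^sup>2"
  have \<rho>: "\<And>q. q \<in> J \<Longrightarrow> bounded_meas q (kern q r)" "\<And>q. q \<in> J \<Longrightarrow> integral\<^sup>L (M q) (kern q r) = 1"
    if "r \<in> I" for r
    using integral_kern that by auto
  have eq: "pD d L D h K n \<xi> x * ?n x = (\<Sum>r\<in>I. (\<Prod>q\<in>J. kern q r (x q)) * ?n x) / N" for x
    unfolding pD_eq by (simp add: sum_distrib_right)
  have int: "integrable (Pi\<^sub>M J M) (\<lambda>x. (\<Prod>q\<in>J. kern q r (x q)) * ?n x)" if "r \<in> I" for r
    using integrable_PiM_norm_sum_wcomb[OF \<rho>[OF that]] .
  then show "integrable (Pi\<^sub>M J M) (\<lambda>x. pD d L D h K n \<xi> x * ?n x)"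
    unfolding eq by (intro integrable_divide Bochner_Integration.integrable_sum)
  have "(\<integral>x. (\<Prod>q\<in>J. kern q r (x q)) * ?n x \<partial>Pi\<^sub>M J M)
      = (\<Sum>j\<in>J. \<integral>y. kern j r y * (norm (wcomb \<delta> j y))\<^sup>2 \<partial>M j) - (\<Sum>j\<in>J. inner (\<delta> r j) (smooth r j \<delta>))"
    if "r \<in> I" for r
    using integral_PiM_norm_sum_wcomb[OF \<rho>[OF that], of \<delta>] homogeneous_cross_terms[OF hom that]
    unfolding wmean_kern by simp
  then have "(\<integral>x. pD d L D h K n \<xi> x * ?n x \<partial>Pi\<^sub>M J M)
      = ((\<Sum>j\<in>J. \<Sum>r\<in>I. \<integral>y. kern j r y * (norm (wcomb \<delta> j y))\<^sup>2 \<partial>M j)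
        - (\<Sum>j\<in>J. \<Sum>r\<in>I. inner (\<delta> r j) (smooth r j \<delta>))) / N"
    unfolding eq using int by (simp add: Bochner_Integration.integral_sum sum_subtractf sum.swap[of _ I])
  also have "\<dots> = 0"
    by (simp add: sum_integral_kern_norm_wcomb)
  finally show "(\<integral>x. pD d L D h K n \<xi> x * ?n x \<partial>Pi\<^sub>M J M) = 0" .
qed

lemma PD_eq: "PD d L D h K n \<xi> = density (Pi\<^sub>M J M) (\<lambda>x. ennreal (pD d L D h K n \<xi> x))"
proof -
  have "Pi\<^sub>M J (\<lambda>j. restrict_space (Leb (L j)) (D j)) = Pi\<^sub>M J M"
    by (rule PiM_cong) (auto simp: M_eq)
  then show ?thesis unfolding PD_def by simp
qed

lemma space_PiM_M: "x \<in> space (Pi\<^sub>M J M) \<Longrightarrow> j \<in> J \<Longrightarrow> x j \<in> D j"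
  by (auto simp: space_PiM PiE_iff space_M)

lemma pD_measurable: "pD d L D h K n \<xi> \<in> borel_measurable (Pi\<^sub>M J M)"
proof -
  have "(\<lambda>x. kern j i (x j)) \<in> borel_measurable (Pi\<^sub>M J M)" if "j \<in> J" for i j
    using that bounded_meas_measurable[OF bounded_meas_kern[OF that]]
    by (intro measurable_compose[OF measurable_component_singleton]) auto
  then show ?thesis unfolding pD_eq[abs_def] by measurable
qed

lemma pD_nonneg: "pD d L D h K n \<xi> x \<ge> 0"
  unfolding pD_eq using N_pos kern_nonneg by (auto intro!: divide_nonneg_pos sum_nonneg prod_nonneg)

lemma AE_pD_norm_sum_wcomb_eq_0:
  fixes \<delta> :: "nat \<Rightarrow> nat \<Rightarrow> 'h::{real_inner,banach,second_countable_topology}"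
  assumes hom: "coef_system (\<lambda>_. 0) \<delta>"
  shows "AE x in Pi\<^sub>M J M. pD d L D h K n \<xi> x * (norm (\<Sum>j\<in>J. wcomb \<delta> j (x j)))\<^sup>2 = 0"
  using integral_nonneg_eq_0_iff_AE[OF integral_pD_norm_sum_wcomb_homogeneous(1)[OF hom]]
    integral_pD_norm_sum_wcomb_homogeneous(2)[OF hom] pD_nonneg
  by (auto intro: AE_I2)

lemma SBF_solutions_AE_eq:
  fixes Y :: "nat \<Rightarrow> 'h::{real_inner,banach,second_countable_topology}"
  assumes sys: "SBF_system d L D h K n \<xi> Y f" and sys': "SBF_system d L D h K n \<xi> Y f'"
  shows "AE x in PD d L D h K n \<xi>. (\<Sum>j\<in>J. f j (x j)) = (\<Sum>j\<in>J. f' j (x j))"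
proof -
  obtain \<delta> where hom: "coef_system (\<lambda>_. 0) \<delta>" and diff: "\<forall>j\<in>J. \<forall>x\<in>D j. f j x - f' j x = wcomb \<delta> j x"
    using SBF_solutions_difference[OF sys sys'] by metis
  have "AE x in Pi\<^sub>M J M. 0 < ennreal (pD d L D h K n \<xi> x) \<longrightarrow> (\<Sum>j\<in>J. f j (x j)) = (\<Sum>j\<in>J. f' j (x j))"
    using AE_pD_norm_sum_wcomb_eq_0[OF hom] AE_space
  proof eventually_elim
    case (elim x)
    have diff_sum: "(\<Sum>j\<in>J. f j (x j)) - (\<Sum>j\<in>J. f' j (x j)) = (\<Sum>j\<in>J. wcomb \<delta> j (x j))"
      unfolding sum_subtractf[symmetric] using diff space_PiM_M[OF elim(2)] by (intro sum.cong) auto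
    show ?case
    proof
      assume "0 < ennreal (pD d L D h K n \<xi> x)"
      then have "pD d L D h K n \<xi> x > 0" by (simp add: ennreal_less_zero_iff)
      then have "(\<Sum>j\<in>J. wcomb \<delta> j (x j)) = 0" using elim(1) by simp
      then show "(\<Sum>j\<in>J. f j (x j)) = (\<Sum>j\<in>J. f' j (x j))" using diff_sum by simp
    qed
  qed
  moreover have "(\<lambda>x. ennreal (pD d L D h K n \<xi> x)) \<in> borel_measurable (Pi\<^sub>M J M)"
    using pD_measurable by measurable
  ultimately show ?thesis unfolding PD_eq by (subst AE_density) auto
qed

lemma pD_pos:
  assumes cover: "\<forall>x. (\<forall>j\<in>J. x j \<in> D j) \<longrightarrow>
      (\<exists>i\<in>{1..n}. inD d D \<xi> i \<and> (\<forall>j\<in>J. enorm (L j) (\<lambda>k. \<xi> i j k - x j k) < h j))"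
    and x: "x \<in> space (Pi\<^sub>M J M)"
  shows "pD d L D h K n \<xi> x > 0"
proof -
  obtain i where "i \<in> {1..n}" "inD d D \<xi> i" and near: "\<forall>j\<in>J. enorm (L j) (\<lambda>k. \<xi> i j k - x j k) < h j"
    using cover space_PiM_M[OF x] by blast
  then have i: "i \<in> I" unfolding I_def by auto
  have "0 < (\<Prod>j\<in>J. kern j i (x j))" using kern_pos near by (intro prod_pos) auto
  also have "\<dots> \<le> (\<Sum>r\<in>I. \<Prod>j\<in>J. kern j r (x j))"
    using i finite_I kern_nonneg by (intro member_le_sum[of i I "\<lambda>r. \<Prod>j\<in>J. kern j r (x j)"] prod_nonneg) auto
  finally show ?thesis unfolding pD_eq using N_pos by simp
qed

lemma AE_wcomb_eq_0:
  fixes \<delta> :: "nat \<Rightarrow> nat \<Rightarrow> 'h::{real_inner,banach,second_countable_topology}"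
  assumes j: "j \<in> J" and zero: "(\<integral>y. ksum j y / N * (norm (wcomb \<delta> j y))\<^sup>2 \<partial>M j) = 0"
  shows "AE y in M j. wcomb \<delta> j y = 0"
proof -
  have "bounded_meas j (\<lambda>y. ksum j y / N * (norm (wcomb \<delta> j y))\<^sup>2)"
    using j unfolding divide_inverse
    by (intro bounded_meas_norm_wcomb bounded_meas_mult bounded_meas_ksum bounded_meas_const)
  moreover have "AE y in M j. 0 \<le> ksum j y / N * (norm (wcomb \<delta> j y))\<^sup>2"
    using ksum_nonneg[OF j] N_pos by (intro AE_I2) simp
  ultimately have "AE y in M j. ksum j y / N * (norm (wcomb \<delta> j y))\<^sup>2 = 0"
    using integral_nonneg_eq_0_iff_AE[OF bounded_meas_integrable] zero by blast
  then show ?thesis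
    using AE_space
  proof eventually_elim
    case (elim y)
    then have "ksum j y > 0" using ksum_pos[OF j] space_M[OF j] by simp
    then show ?case using elim(1) N_pos by simp
  qed
qed

lemma wmean_ksum: "m \<in> J \<Longrightarrow> wmean (\<lambda>q y. ksum q y / N) \<delta> m = (1 / N) *\<^sub>R (\<Sum>i\<in>I. \<delta> i m)"
  unfolding wmean_def scaleR_sum_right
  by (rule sum.cong[OF refl], subst integral_ksum_w, assumption+, rule refl)

text \<open>Under the strong covering condition the difference of the additive fits vanishes
  everywhere on D, so integrating its squared norm against the product of the marginal
  densities gives zero; the centring constraints kill the cross terms, leaving the sum of the
  weighted L2 norms of the component differences.\<close>

lemma integral_ksum_norm_wcomb_eq_0:
  fixes \<delta> :: "nat \<Rightarrow> nat \<Rightarrow> 'h::{real_inner,banach,second_countable_topology}"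
  assumes cover: "\<forall>x. (\<forall>j\<in>J. x j \<in> D j) \<longrightarrow>
      (\<exists>i\<in>{1..n}. inD d D \<xi> i \<and> (\<forall>j\<in>J. enorm (L j) (\<lambda>k. \<xi> i j k - x j k) < h j))"
    and hom: "coef_system (\<lambda>_. 0) \<delta>" and centred: "\<forall>j\<in>J. (\<Sum>i\<in>I. \<delta> i j) = 0" and j: "j \<in> J"
  shows "(\<integral>y. ksum j y / N * (norm (wcomb \<delta> j y))\<^sup>2 \<partial>M j) = 0"
proof -
  define \<rho> where "\<rho> q y = ksum q y / N" for q y
  have \<rho>: "\<And>q. q \<in> J \<Longrightarrow> bounded_meas q (\<rho> q)" "\<And>q. q \<in> J \<Longrightarrow> integral\<^sup>L (M q) (\<rho> q) = 1"
    unfolding \<rho>_def[abs_def] using integral_ksum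
    by (auto simp: divide_inverse intro!: bounded_meas_mult)
  have "AE x in Pi\<^sub>M J M. (norm (\<Sum>j\<in>J. wcomb \<delta> j (x j)))\<^sup>2 = 0"
    using AE_pD_norm_sum_wcomb_eq_0[OF hom] AE_space by eventually_elim (use pD_pos[OF cover] in fastforce)
  then have "(\<integral>x. (\<Prod>q\<in>J. \<rho> q (x q)) * (norm (\<Sum>j\<in>J. wcomb \<delta> j (x j)))\<^sup>2 \<partial>Pi\<^sub>M J M) = 0"
    by (intro integral_eq_zero_AE) (auto elim: AE_mp)
  moreover have "wmean \<rho> \<delta> m = 0" if "m \<in> J" for m
    unfolding \<rho>_def wmean_ksum[OF that] using centred that by simp
  ultimately have "(\<Sum>m\<in>J. \<integral>y. \<rho> m y * (norm (wcomb \<delta> m y))\<^sup>2 \<partial>M m) = 0"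
    using integral_PiM_norm_sum_wcomb[OF \<rho>, of \<delta>] by simp
  moreover have "(\<integral>y. \<rho> m y * (norm (wcomb \<delta> m y))\<^sup>2 \<partial>M m) \<ge> 0" if "m \<in> J" for m
    unfolding \<rho>_def using ksum_nonneg[OF that] N_pos by (intro integral_nonneg_AE AE_I2) auto
  ultimately show ?thesis
    unfolding \<rho>_def using j by (subst (asm) sum_nonneg_eq_0_iff) auto
qed

lemma SBF_solutions_eq:
  fixes Y :: "nat \<Rightarrow> 'h::{real_inner,banach,second_countable_topology}"
  assumes cover: "\<forall>x. (\<forall>j\<in>J. x j \<in> D j) \<longrightarrow>
      (\<exists>i\<in>{1..n}. inD d D \<xi> i \<and> (\<forall>j\<in>J. enorm (L j) (\<lambda>k. \<xi> i j k - x j k) < h j))"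
    and sys: "SBF_system d L D h K n \<xi> Y f" and cons: "SBF_constraints d L D h K n \<xi> f"
    and sys': "SBF_system d L D h K n \<xi> Y f'" and cons': "SBF_constraints d L D h K n \<xi> f'"
    and j: "j \<in> J"
  shows "AE t in Leb (L j). t \<in> D j \<longrightarrow> f j t = f' j t"
proof -
  obtain \<delta> where hom: "coef_system (\<lambda>_. 0) \<delta>" and diff: "\<forall>j\<in>J. \<forall>x\<in>D j. f j x - f' j x = wcomb \<delta> j x"
    and "SBF_constraints d L D h K n \<xi> f \<and> SBF_constraints d L D h K n \<xi> f' \<longrightarrow> (\<forall>j\<in>J. (\<Sum>i\<in>I. \<delta> i j) = 0)"
    by (rule SBF_solutions_difference[OF sys sys'])
  with cons cons' have centred: "\<forall>j\<in>J. (\<Sum>i\<in>I. \<delta> i j) = 0" by blast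
  have "AE y in M j. wcomb \<delta> j y = 0"
    by (rule AE_wcomb_eq_0[OF j integral_ksum_norm_wcomb_eq_0[OF cover hom centred j]])
  then have "AE y in M j. f j y = f' j y"
    using AE_space by eventually_elim (use diff j space_M[OF j] in force)
  then show ?thesis
    unfolding M_eq[OF j] AE_restrict_space_iff[OF D_inter_space[OF j]] .
qed

end

theorem proposition7:
  fixes d n :: nat
    and L :: "nat \<Rightarrow> nat"
    and D :: "nat \<Rightarrow> (nat \<Rightarrow> real) set"
    and h :: "nat \<Rightarrow> real"
    and K :: "nat \<Rightarrow> real \<Rightarrow> real"
    and \<xi> :: "nat \<Rightarrow> nat \<Rightarrow> (nat \<Rightarrow> real)"
    and Y :: "nat \<Rightarrow> 'h::{real_inner,banach,second_countable_topology}"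
  assumes d: "d \<ge> 1"
    and L: "\<forall>j\<in>{1..d}. L j \<ge> 1"
    and D_space: "\<forall>j\<in>{1..d}. D j \<subseteq> space (Leb (L j))"
    and D_compact: "\<forall>j\<in>{1..d}. compact (D j)"
    and D_pos: "\<forall>j\<in>{1..d}. measure (Leb (L j)) (D j) > 0"
    and xi_space: "\<forall>i\<in>{1..n}. \<forall>j\<in>{1..d}. \<xi> i j \<in> space (Leb (L j))"
    and some_in_D: "\<exists>i\<in>{1..n}. inD d D \<xi> i"
    and h: "\<forall>j\<in>{1..d}. h j > 0"
    and K_cont: "\<forall>j\<in>{1..d}. continuous_on {0..} (K j)"
    and K_nonneg: "\<forall>j\<in>{1..d}. \<forall>u\<ge>0. K j u \<ge> 0"
    and K_pos: "\<forall>j\<in>{1..d}. \<forall>u\<in>{0..<1}. K j u > 0"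
    and K_zero: "\<forall>j\<in>{1..d}. \<forall>u\<ge>1. K j u = 0"
    and condA: "\<forall>j\<in>{1..d}. \<forall>x\<in>D j. \<exists>i\<in>{1..n}. inD d D \<xi> i \<and>
                   enorm (L j) (\<lambda>k. \<xi> i j k - x k) < h j"
  shows "(\<exists>f. SBF_system d L D h K n \<xi> Y f \<and> SBF_constraints d L D h K n \<xi> f)
    \<and> (\<forall>f f'. SBF_system d L D h K n \<xi> Y f \<and> SBF_system d L D h K n \<xi> Y f' \<longrightarrow>
         (AE x in PD d L D h K n \<xi>. (\<Sum>j\<in>{1..d}. f j (x j)) = (\<Sum>j\<in>{1..d}. f' j (x j))))
    \<and> ((\<forall>x. (\<forall>j\<in>{1..d}. x j \<in> D j) \<longrightarrow>
           (\<exists>i\<in>{1..n}. inD d D \<xi> i \<and> (\<forall>j\<in>{1..d}. enorm (L j) (\<lambda>k. \<xi> i j k - x j k) < h j)))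
       \<longrightarrow> (\<forall>f f'. SBF_system d L D h K n \<xi> Y f \<and> SBF_constraints d L D h K n \<xi> f
              \<and> SBF_system d L D h K n \<xi> Y f' \<and> SBF_constraints d L D h K n \<xi> f' \<longrightarrow>
              (\<forall>j\<in>{1..d}. AE t in Leb (L j). t \<in> D j \<longrightarrow> f j t = f' j t)))"
proof -
  interpret sbf d n L D h K \<xi>
    by unfold_locales (use D_space D_pos some_in_D h K_cont K_nonneg K_pos K_zero condA in auto)
  obtain \<beta> where "coef_system Y \<beta>" and "\<forall>j\<in>{1..d}. (\<Sum>i\<in>I. \<beta> i j) = 0"
    using coef_system_solvable by blast
  then have "SBF_system d L D h K n \<xi> Y (wcomb \<beta>) \<and> SBF_constraints d L D h K n \<xi> (wcomb \<beta>)"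
    by (simp add: SBF_system_wcomb SBF_constraints_wcomb)
  then show ?thesis
    using SBF_solutions_AE_eq[where Y = Y] SBF_solutions_eq[where Y = Y] by blast
qed

end
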